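(* Let $G=(N,E)$ be a DAG and $G'=G^*$. Then $\mathcal{P}^{G'}\supseteq\mathcal{P}^G$ if and only if $\mathrm{pa}_G(s)$ and $\mathrm{ch}_G(s)$ are complete for all $s\in N$.
   Context: DAG: finite directed graph without directed cycles; $\mathrm{pa}_G(s)$, $\mathrm{ch}_G(s)$ = parents/children of $s$. $G^*=(N,\{(t,s):(s,t)\in E\})$ is $G$ with all edges reversed. Two nodes are joined if an edge connects them; a set is complete if every pair of its elements is joined. Each node $s$ has a state space $\mathsf{X}_s$ (finite set with counting measure, or finite-dimensional real vector space with Lebesgue measure $\mu_s$), $\mu=\otimes_s\mu_s$; $\mathcal{P}^G$ is the set of probability distributions on $\times_s\mathsf{X}_s$ with $\mu$-density $p(x)=\prod_{s}k^s(x_s\mid x_{\mathrm{pa}_G(s)})$ for some nonnegative measurable $k^s$ with $\int k^s(x_s\mid x_{\mathrm{pa}_G(s)})\,d\mu_s(x_s)=1$. *)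

theory Defs
  imports "HOL-Probability.Probability"
begin

text \<open>A DAG on the finite node type 'n is an edge relation E with no directed cycles
  (library notion acyclic: no x with (x,x) in the transitive closure; this excludes loops).\<close>

definition pa :: "('n \<times> 'n) set \<Rightarrow> 'n \<Rightarrow> 'n set" where
  "pa E s = {t. (t, s) \<in> E}"

definition ch :: "('n \<times> 'n) set \<Rightarrow> 'n \<Rightarrow> 'n set" where
  "ch E s = {t. (s, t) \<in> E}"

text \<open>The reversed graph G* is given by converse E.\<close>

definition joined :: "('n \<times> 'n) set \<Rightarrow> 'n \<Rightarrow> 'n \<Rightarrow> bool" where
  "joined E a b \<longleftrightarrow> (a, b) \<in> E \<or> (b, a) \<in> E"

definition complete_set :: "('n \<times> 'n) set \<Rightarrow> 'n set \<Rightarrow> bool" where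
  "complete_set E A \<longleftrightarrow> (\<forall>a\<in>A. \<forall>b\<in>A. a \<noteq> b \<longrightarrow> joined E a b)"

text \<open>State spaces, all encoded in the common value type nat => real: either a finite set
  (with at least two points) with counting measure, or R^d (d >= 1) realised as the product
  of d copies of the Lebesgue-Borel measure.\<close>

definition state_space :: "(nat \<Rightarrow> real) measure \<Rightarrow> bool" where
  "state_space M \<longleftrightarrow>
     (\<exists>X. finite X \<and> 2 \<le> card X \<and> M = count_space X) \<or>
     (\<exists>d::nat. 1 \<le> d \<and> M = PiM {..<d} (\<lambda>_. (lborel :: real measure)))"

definition joint_measure :: "('n::finite \<Rightarrow> 'v measure) \<Rightarrow> ('n \<Rightarrow> 'v) measure" where
  "joint_measure \<mu> = PiM UNIV \<mu>"

definition is_kernel ::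
  "('n \<times> 'n) set \<Rightarrow> ('n \<Rightarrow> 'v measure) \<Rightarrow> 'n \<Rightarrow> ('v \<Rightarrow> ('n \<Rightarrow> 'v) \<Rightarrow> real) \<Rightarrow> bool" where
  "is_kernel E \<mu> s k \<longleftrightarrow>
     (\<forall>y z. 0 \<le> k y z) \<and>
     (\<lambda>(y, z). k y z) \<in> borel_measurable (\<mu> s \<Otimes>\<^sub>M PiM (pa E s) \<mu>) \<and>
     (\<forall>z\<in>space (PiM (pa E s) \<mu>). (\<integral>\<^sup>+ y. ennreal (k y z) \<partial>\<mu> s) = 1)"

definition model :: "('n::finite \<times> 'n) set \<Rightarrow> ('n \<Rightarrow> 'v measure) \<Rightarrow> ('n \<Rightarrow> 'v) measure set" where
  "model E \<mu> = {P. prob_space P \<and>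
     (\<exists>k. (\<forall>s. is_kernel E \<mu> s (k s)) \<and>
          P = density (joint_measure \<mu>)
                (\<lambda>x. ennreal (\<Prod>s\<in>UNIV. k s (x s) (restrict x (pa E s)))))}"

end

theory Submission
  imports Defs
begin

text \<open>If all parent and child sets are complete, a density that factorizes along the graph is a
  product of factors on the complete sets \<open>{s} \<union> pa s\<close>. Such a product can be rewritten, sink by
  sink, as a product of Markov kernels of the reversed graph, whose parent sets are the complete
  sets \<open>ch s\<close>: every factor involving a sink \<open>t\<close> lives on \<open>{t} \<union> ch t\<close> by completeness, their
  normalization is the kernel of \<open>t\<close>, and their integral over \<open>x\<^sub>t\<close> is a new factor on the
  complete set \<open>ch t\<close>.

  Conversely, if two parents \<open>a\<close>, \<open>b\<close> of \<open>s\<close> are not joined, let \<open>a\<close> and \<open>b\<close> be independent fair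
  bits and let \<open>s\<close> record whether they differ; if two children \<open>a\<close>, \<open>b\<close> of \<open>s\<close> are not joined, let
  both copy a fair bit at \<open>s\<close>. Orient the pair so that there is no directed path from \<open>a\<close> to \<open>b\<close>.
  In the reversed graph \<open>b\<close> is then a sink of the ancestral closure of \<open>{a, b}\<close>, so the local
  Markov property makes \<open>x\<^sub>b\<close> independent of \<open>x\<^sub>a\<close> given the values on \<open>ch b\<close>, which fails for
  both distributions.\<close>

section \<open>Kernels and kernel products\<close>

lemma is_kernel_nonneg: "is_kernel R \<mu> v k \<Longrightarrow> 0 \<le> k y z"
  unfolding is_kernel_def by blast

lemma is_kernel_measurable:
  "is_kernel R \<mu> v k \<Longrightarrow> (\<lambda>(y, z). k y z) \<in> borel_measurable (\<mu> v \<Otimes>\<^sub>M PiM (pa R v) \<mu>)"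
  unfolding is_kernel_def by blast

lemma is_kernel_nn_integral_eq_1:
  "is_kernel R \<mu> v k \<Longrightarrow> z \<in> space (PiM (pa R v) \<mu>) \<Longrightarrow> (\<integral>\<^sup>+y. ennreal (k y z) \<partial>\<mu> v) = 1"
  unfolding is_kernel_def by blast

lemma is_kernel_measurable_slice:
  assumes "is_kernel R \<mu> v k" "z \<in> space (PiM (pa R v) \<mu>)"
  shows "(\<lambda>y. k y z) \<in> borel_measurable (\<mu> v)"
  using measurable_Pair1[OF is_kernel_measurable[OF assms(1)] assms(2)] by simp

lemma is_kernel_measurable_PiM:
  assumes "is_kernel R \<mu> v k" "v \<in> S" "pa R v \<subseteq> S"
  shows "(\<lambda>x. k (x v) (restrict x (pa R v))) \<in> borel_measurable (PiM S \<mu>)"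
proof -
  have "(\<lambda>x. (x v, restrict x (pa R v))) \<in> measurable (PiM S \<mu>) (\<mu> v \<Otimes>\<^sub>M PiM (pa R v) \<mu>)"
    using assms by (intro measurable_Pair measurable_component_singleton measurable_restrict_subset)
  from measurable_comp[OF this is_kernel_measurable[OF assms(1)]] show ?thesis
    by (simp add: comp_def)
qed

lemma is_kernel_const:
  assumes "d \<in> borel_measurable (\<mu> v)" "\<And>y. 0 \<le> d y" "(\<integral>\<^sup>+y. ennreal (d y) \<partial>\<mu> v) = 1"
  shows "is_kernel R \<mu> v (\<lambda>y z. d y)"
  unfolding is_kernel_def
proof (intro conjI allI ballI)
  have "(\<lambda>p. d (fst p)) \<in> borel_measurable (\<mu> v \<Otimes>\<^sub>M PiM (pa R v) \<mu>)"
    using assms(1) by measurable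
  then show "(\<lambda>(y, z). d y) \<in> borel_measurable (\<mu> v \<Otimes>\<^sub>M PiM (pa R v) \<mu>)"
    by (simp add: case_prod_beta')
qed (use assms in auto)

lemma is_kernel_indicator:
  assumes "U \<in> sets (\<mu> v)" "emeasure (\<mu> v) U = 1"
  shows "is_kernel R \<mu> v (\<lambda>y z. indicator U y)"
  using assms by (intro is_kernel_const) (auto simp: ennreal_indicator)

lemma is_kernel_if:
  assumes "Measurable.pred (PiM (pa R v) \<mu>) P" "is_kernel R \<mu> v k1" "is_kernel R \<mu> v k2"
  shows "is_kernel R \<mu> v (\<lambda>y z. if P z then k1 y z else k2 y z)"
  unfolding is_kernel_def
proof (intro conjI allI ballI)
  have [measurable]: "Measurable.pred (\<mu> v \<Otimes>\<^sub>M PiM (pa R v) \<mu>) (\<lambda>p. P (snd p))"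
    using measurable_comp[OF measurable_snd assms(1)] by (simp add: comp_def)
  have [measurable]: "(\<lambda>p. k1 (fst p) (snd p)) \<in> borel_measurable (\<mu> v \<Otimes>\<^sub>M PiM (pa R v) \<mu>)"
    "(\<lambda>p. k2 (fst p) (snd p)) \<in> borel_measurable (\<mu> v \<Otimes>\<^sub>M PiM (pa R v) \<mu>)"
    using is_kernel_measurable[OF assms(2)] is_kernel_measurable[OF assms(3)]
    by (simp_all add: case_prod_beta')
  have "(\<lambda>p. if P (snd p) then k1 (fst p) (snd p) else k2 (fst p) (snd p))
      \<in> borel_measurable (\<mu> v \<Otimes>\<^sub>M PiM (pa R v) \<mu>)"
    by measurable
  then show "(\<lambda>(y, z). if P z then k1 y z else k2 y z) \<in> borel_measurable (\<mu> v \<Otimes>\<^sub>M PiM (pa R v) \<mu>)"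
    by (simp add: case_prod_beta')
  show "0 \<le> (if P z then k1 y z else k2 y z)" for y z
    using assms(2,3) by (simp add: is_kernel_nonneg)
  show "(\<integral>\<^sup>+y. ennreal (if P z then k1 y z else k2 y z) \<partial>\<mu> v) = 1"
    if "z \<in> space (PiM (pa R v) \<mu>)" for z
    using assms(2,3) that by (cases "P z") (simp_all add: is_kernel_nn_integral_eq_1)
qed

definition kernel_prod ::
  "('n \<times> 'n) set \<Rightarrow> ('n \<Rightarrow> 'v \<Rightarrow> ('n \<Rightarrow> 'v) \<Rightarrow> real) \<Rightarrow> 'n set \<Rightarrow> ('n \<Rightarrow> 'v) \<Rightarrow> ennreal" where
  "kernel_prod R h S x = (\<Prod>v\<in>S. ennreal (h v (x v) (restrict x (pa R v))))"

lemma kernel_prod_measurable: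
  assumes "\<And>v. is_kernel R \<mu> v (h v)" "\<And>v. v \<in> T \<Longrightarrow> pa R v \<subseteq> S" "T \<subseteq> S"
  shows "kernel_prod R h T \<in> borel_measurable (PiM S \<mu>)"
  unfolding kernel_prod_def using assms
  by (intro borel_measurable_prod_ennreal
      measurable_compose[OF is_kernel_measurable_PiM measurable_ennreal])
    auto

lemma kernel_prod_UNIV:
  assumes "\<And>v. is_kernel R \<mu> v (h v)"
  shows "kernel_prod R h UNIV = (\<lambda>x. ennreal (\<Prod>v\<in>UNIV. h v (x v) (restrict x (pa R v))))"
  unfolding kernel_prod_def by (intro ext prod_ennreal) (use is_kernel_nonneg assms in metis)

section \<open>Integration over product measures\<close>

lemma product_nn_integral_remove:
  fixes \<mu> :: "'n::finite \<Rightarrow> 'v measure"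
  assumes "\<And>v. sigma_finite_measure (\<mu> v)" "c \<in> I" "F \<in> borel_measurable (PiM I \<mu>)"
  shows "(\<integral>\<^sup>+x. F x \<partial>PiM I \<mu>) = (\<integral>\<^sup>+x. (\<integral>\<^sup>+y. F (x(c := y)) \<partial>\<mu> c) \<partial>PiM (I - {c}) \<mu>)"
    and "(\<lambda>x. \<integral>\<^sup>+y. F (x(c := y)) \<partial>\<mu> c) \<in> borel_measurable (PiM (I - {c}) \<mu>)"
proof -
  interpret product_sigma_finite \<mu> by (simp add: product_sigma_finite_def assms(1))
  have F: "F \<in> borel_measurable (PiM (insert c (I - {c})) \<mu>)"
    using assms(2,3) by (simp add: insert_absorb)
  show "(\<integral>\<^sup>+x. F x \<partial>PiM I \<mu>) = (\<integral>\<^sup>+x. (\<integral>\<^sup>+y. F (x(c := y)) \<partial>\<mu> c) \<partial>PiM (I - {c}) \<mu>)"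
    using product_nn_integral_insert[OF _ _ F] assms(2) by (simp add: insert_absorb)
  have "(\<lambda>(x, y). F (x(c := y))) \<in> borel_measurable (PiM (I - {c}) \<mu> \<Otimes>\<^sub>M \<mu> c)"
    using measurable_comp[OF measurable_add_dim[of c "I - {c}" \<mu>] F]
    by (simp add: comp_def case_prod_beta)
  then show "(\<lambda>x. \<integral>\<^sup>+y. F (x(c := y)) \<partial>\<mu> c) \<in> borel_measurable (PiM (I - {c}) \<mu>)"
    by (rule M.borel_measurable_nn_integral)
qed

lemma product_nn_integral_remove_factor:
  fixes \<mu> :: "'n::finite \<Rightarrow> 'v measure"
  assumes "\<And>v. sigma_finite_measure (\<mu> v)" "t \<in> S"
    and F: "F \<in> borel_measurable (PiM S \<mu>)" and G: "G \<in> borel_measurable (PiM S \<mu>)"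
    and split: "\<And>x y. x \<in> space (PiM (S - {t}) \<mu>) \<Longrightarrow> F (x(t := y)) = c x * b x y"
    and b: "\<And>x. x \<in> space (PiM (S - {t}) \<mu>) \<Longrightarrow> b x \<in> borel_measurable (\<mu> t)"
  shows "(\<integral>\<^sup>+x. F x * G x \<partial>PiM S \<mu>) =
      (\<integral>\<^sup>+x. c x * (\<integral>\<^sup>+y. b x y * G (x(t := y)) \<partial>\<mu> t) \<partial>PiM (S - {t}) \<mu>)"
proof -
  have "(\<integral>\<^sup>+x. F x * G x \<partial>PiM S \<mu>) =
      (\<integral>\<^sup>+x. (\<integral>\<^sup>+y. F (x(t := y)) * G (x(t := y)) \<partial>\<mu> t) \<partial>PiM (S - {t}) \<mu>)"
    using F G by (intro product_nn_integral_remove(1) assms(1,2)) measurable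
  also have "\<dots> = (\<integral>\<^sup>+x. c x * (\<integral>\<^sup>+y. b x y * G (x(t := y)) \<partial>\<mu> t) \<partial>PiM (S - {t}) \<mu>)"
  proof (rule nn_integral_cong)
    fix x assume x: "x \<in> space (PiM (S - {t}) \<mu>)"
    have "(\<lambda>y. x(t := y)) \<in> measurable (\<mu> t) (PiM S \<mu>)"
      using measurable_component_update[OF x, of t] assms(2) by (simp add: insert_absorb)
    from measurable_comp[OF this G] have "(\<lambda>y. b x y * G (x(t := y))) \<in> borel_measurable (\<mu> t)"
      using b[OF x] by (simp add: comp_def)
    then show "(\<integral>\<^sup>+y. F (x(t := y)) * G (x(t := y)) \<partial>\<mu> t) = c x *
        (\<integral>\<^sup>+y. b x y * G (x(t := y)) \<partial>\<mu> t)"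
      by (simp add: split[OF x] mult.assoc nn_integral_cmult)
  qed
  finally show ?thesis .
qed

lemma product_nn_integral_remove2:
  fixes \<mu> :: "'n::finite \<Rightarrow> 'v measure"
  assumes sf: "\<And>v. sigma_finite_measure (\<mu> v)" and ab: "a \<in> I" "b \<in> I" "a \<noteq> b"
    and F: "F \<in> borel_measurable (PiM I \<mu>)"
  shows "(\<integral>\<^sup>+x. F x \<partial>PiM I \<mu>) =
      (\<integral>\<^sup>+x. (\<integral>\<^sup>+yb. (\<integral>\<^sup>+ya. F (x(b := yb, a := ya)) \<partial>\<mu> a) \<partial>\<mu> b) \<partial>PiM (I - {a} - {b}) \<mu>)"
    and "(\<lambda>x. \<integral>\<^sup>+yb. (\<integral>\<^sup>+ya. F (x(b := yb, a := ya)) \<partial>\<mu> a) \<partial>\<mu> b) \<in>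
        borel_measurable (PiM (I - {a} - {b}) \<mu>)"
  using product_nn_integral_remove[OF sf ab(1) F]
    product_nn_integral_remove[OF sf _ product_nn_integral_remove(2)[OF sf ab(1) F], of b] ab(2,3)
  by auto

lemma product_nn_integral_prod_neq_zero:
  assumes "\<And>v. sigma_finite_measure (\<mu> v)" "finite I"
    and "\<And>v. v \<in> I \<Longrightarrow> G v \<in> borel_measurable (\<mu> v)" "\<And>v. v \<in> I \<Longrightarrow> (\<integral>\<^sup>+y. G v y \<partial>\<mu> v) \<noteq> 0"
  shows "(\<integral>\<^sup>+x. (\<Prod>v\<in>I. G v (x v)) \<partial>PiM I \<mu>) \<noteq> 0"
proof -
  interpret product_sigma_finite \<mu> by (simp add: product_sigma_finite_def assms(1))
  show ?thesis using assms by (subst product_nn_integral_prod) auto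
qed

section \<open>Ancestral sets and marginals\<close>

definition ancestral :: "('n \<times> 'n) set \<Rightarrow> 'n set \<Rightarrow> bool" where
  "ancestral R A \<longleftrightarrow> (\<forall>v\<in>A. pa R v \<subseteq> A)"

definition ancestors :: "('n \<times> 'n) set \<Rightarrow> 'n set \<Rightarrow> 'n set" where
  "ancestors R X = {v. \<exists>x\<in>X. (v, x) \<in> R\<^sup>*}"

lemma ancestral_ancestors: "ancestral R (ancestors R X)"
  unfolding ancestral_def ancestors_def pa_def by (auto intro: converse_rtrancl_into_rtrancl)

lemma subset_ancestors: "X \<subseteq> ancestors R X"
  unfolding ancestors_def by auto

lemma ancestors_not_child:
  assumes "acyclic R" "(b, a) \<notin> R\<^sup>*" "c \<in> ancestors R {a, b}"
  shows "(b, c) \<notin> R"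
proof
  assume bc: "(b, c) \<in> R"
  from assms(3) consider "(c, a) \<in> R\<^sup>*" | "(c, b) \<in> R\<^sup>*"
    unfolding ancestors_def by blast
  then show False
  proof cases
    case 1
    then show False using converse_rtrancl_into_rtrancl[OF bc] assms(2) by blast
  next
    case 2
    then have "(b, b) \<in> R\<^sup>+" by (rule rtrancl_into_trancl2[OF bc])
    then show False using assms(1) unfolding acyclic_def by blast
  qed
qed

lemma acyclic_obtain_sink:
  fixes R :: "('n::finite \<times> 'n) set"
  assumes "acyclic R" "X \<noteq> {}"
  obtains t where "t \<in> X" "\<And>c. c \<in> X \<Longrightarrow> (t, c) \<notin> R"
proof -
  have "wf (R\<inverse>)" using assms(1) by (intro finite_acyclic_wf_converse) auto
  with assms(2) obtain t where "t \<in> X" "\<And>c. (c, t) \<in> R\<inverse> \<Longrightarrow> c \<notin> X"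
    by (metis ex_in_conv wfE_min)
  then show ?thesis using that by blast
qed

lemma ancestral_Diff_sink:
  "ancestral R S \<Longrightarrow> (\<And>c. c \<in> S \<Longrightarrow> (t, c) \<notin> R) \<Longrightarrow> ancestral R (S - {t})"
  unfolding ancestral_def pa_def by blast

lemma acyclic_rtrancl_one_direction:
  assumes "acyclic R" "a \<noteq> b"
  shows "(b, a) \<notin> R\<^sup>* \<or> (a, b) \<notin> R\<^sup>*"
proof (rule ccontr)
  assume "\<not> ?thesis"
  then have "(a, b) \<in> R\<^sup>+" "(b, a) \<in> R\<^sup>*" using assms(2) by (auto simp: rtrancl_eq_or_trancl)
  then have "(a, a) \<in> R\<^sup>+" by (rule trancl_rtrancl_trancl)
  then show False using assms(1) unfolding acyclic_def by blast
qed

lemma joined_sym: "joined E a b \<longleftrightarrow> joined E b a"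
  by (auto simp: joined_def)

lemma nn_integral_kernel_prod_remove_sink:
  fixes R :: "('n::finite \<times> 'n) set"
  assumes sf: "\<And>v. sigma_finite_measure (\<mu> v)" and k: "\<And>v. is_kernel R \<mu> v (h v)"
    and S: "ancestral R S" and t: "t \<in> S" and sink: "\<And>c. c \<in> S \<Longrightarrow> (t, c) \<notin> R"
    and F: "F \<in> borel_measurable (PiM S \<mu>)"
  shows "(\<integral>\<^sup>+x. kernel_prod R h S x * F x \<partial>PiM S \<mu>) =
    (\<integral>\<^sup>+x. kernel_prod R h (S - {t}) x *
      (\<integral>\<^sup>+y. ennreal (h t y (restrict x (pa R t))) * F (x(t := y)) \<partial>\<mu> t) \<partial>PiM (S - {t}) \<mu>)"
proof (rule product_nn_integral_remove_factor[OF sf t _ F])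
  have not_pa: "t \<notin> pa R v" if "v \<in> S" for v
    using sink[OF that] by (simp add: pa_def)
  show "kernel_prod R h S \<in> borel_measurable (PiM S \<mu>)"
    using S by (intro kernel_prod_measurable[OF k]) (auto simp: ancestral_def)
  fix x y assume x: "x \<in> space (PiM (S - {t}) \<mu>)"
  have "kernel_prod R h S (x(t := y)) =
      ennreal (h t y (restrict x (pa R t))) * kernel_prod R h (S - {t}) (x(t := y))"
    unfolding kernel_prod_def using t not_pa[OF t] by (simp add: prod.remove restrict_fupd)
  also have "kernel_prod R h (S - {t}) (x(t := y)) = kernel_prod R h (S - {t}) x"
    unfolding kernel_prod_def using not_pa by (intro prod.cong) (auto simp: restrict_fupd)
  finally show "kernel_prod R h S (x(t := y)) =
      kernel_prod R h (S - {t}) x * ennreal (h t y (restrict x (pa R t)))"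
    by (simp only: ac_simps)
  have "restrict x (pa R t) \<in> space (PiM (pa R t) \<mu>)"
    using x S t not_pa[OF t] by (auto simp: space_PiM PiE_iff ancestral_def)
  then show "(\<lambda>y. ennreal (h t y (restrict x (pa R t)))) \<in> borel_measurable (\<mu> t)"
    using is_kernel_measurable_slice[OF k] by measurable
qed

lemma nn_integral_kernel_prod_marginal:
  fixes R :: "('n::finite \<times> 'n) set"
  assumes sf: "\<And>v. sigma_finite_measure (\<mu> v)" and k: "\<And>v. is_kernel R \<mu> v (h v)"
    and acyc: "acyclic R" and A: "ancestral R A" and F: "F \<in> borel_measurable (PiM A \<mu>)"
  shows "(\<integral>\<^sup>+x. kernel_prod R h UNIV x * F (restrict x A) \<partial>PiM UNIV \<mu>) =
    (\<integral>\<^sup>+x. kernel_prod R h A x * F x \<partial>PiM A \<mu>)"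
proof -
  have "(\<integral>\<^sup>+x. kernel_prod R h S x * F (restrict x A) \<partial>PiM S \<mu>) =
      (\<integral>\<^sup>+x. kernel_prod R h A x * F x \<partial>PiM A \<mu>)"
    if "ancestral R S" "A \<subseteq> S" for S
    using finite[of S] that
  proof (induction S rule: finite_psubset_induct)
    case (psubset S)
    show ?case
    proof (cases "S = A")
      case True
      then show ?thesis by (auto intro!: nn_integral_cong simp: space_PiM simp del: restrict_apply)
    next
      case False
      then obtain t where t: "t \<in> S - A" and sinkA: "\<And>c. c \<in> S - A \<Longrightarrow> (t, c) \<notin> R"
        using psubset.prems(2) acyclic_obtain_sink[OF acyc, of "S - A"] by blast
      have sink: "(t, c) \<notin> R" if "c \<in> S" for c
        using that sinkA[of c] A t by (auto simp: ancestral_def pa_def)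
      have "restrict x (pa R t) \<in> space (PiM (pa R t) \<mu>)" if "x \<in> space (PiM (S - {t}) \<mu>)" for x
        using that psubset.prems(1) t sink by (auto simp: space_PiM PiE_iff ancestral_def pa_def)
      then have integrate_t:
          "(\<integral>\<^sup>+y. ennreal (h t y (restrict x (pa R t))) * F (restrict (x(t := y)) A) \<partial>\<mu> t)
          = F (restrict x A)" if "x \<in> space (PiM (S - {t}) \<mu>)" for x
        using t that is_kernel_measurable_slice[OF k] is_kernel_nn_integral_eq_1[OF k]
        by (simp add: restrict_fupd nn_integral_multc)
      have "(\<lambda>x. F (restrict x A)) \<in> borel_measurable (PiM S \<mu>)"
        using measurable_comp[OF measurable_restrict_subset[OF psubset.prems(2)] F]
        by (simp add: comp_def)
      then have "(\<integral>\<^sup>+x. kernel_prod R h S x * F (restrict x A) \<partial>PiM S \<mu>) =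
          (\<integral>\<^sup>+x. kernel_prod R h (S - {t}) x * F (restrict x A) \<partial>PiM (S - {t}) \<mu>)"
        using psubset.prems t sink integrate_t
        by (subst nn_integral_kernel_prod_remove_sink[OF sf k]) (auto intro!: nn_integral_cong)
      also have "\<dots> = (\<integral>\<^sup>+x. kernel_prod R h A x * F x \<partial>PiM A \<mu>)"
        using psubset.prems t sink by (intro psubset.IH ancestral_Diff_sink) auto
      finally show ?thesis .
    qed
  qed
  then show ?thesis using A by (simp add: ancestral_def)
qed

lemma density_kernel_prod_in_model:
  fixes R :: "('n::finite \<times> 'n) set"
  assumes sf: "\<And>v. sigma_finite_measure (\<mu> v)" and acyc: "acyclic R"
    and k: "\<And>v. is_kernel R \<mu> v (h v)"
  shows "density (PiM UNIV \<mu>) (kernel_prod R h UNIV) \<in> model R \<mu>"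
proof -
  have meas: "kernel_prod R h UNIV \<in> borel_measurable (PiM UNIV \<mu>)"
    by (rule kernel_prod_measurable[OF k]) auto
  have "(\<integral>\<^sup>+x. kernel_prod R h UNIV x * (\<lambda>_. 1) (restrict x {}) \<partial>PiM UNIV \<mu>) =
      (\<integral>\<^sup>+x. kernel_prod R h {} x * 1 \<partial>PiM {} \<mu>)"
    by (rule nn_integral_kernel_prod_marginal[OF sf k acyc]) (auto simp: ancestral_def)
  then have "(\<integral>\<^sup>+x. kernel_prod R h UNIV x \<partial>PiM UNIV \<mu>) = 1"
    by (simp add: kernel_prod_def PiM_empty)
  then have "prob_space (density (PiM UNIV \<mu>) (kernel_prod R h UNIV))"
    using meas by (intro prob_spaceI) (simp add: emeasure_density)
  then show ?thesis unfolding model_def joint_measure_def using k kernel_prod_UNIV[OF k] by auto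
qed

lemma model_obtain_kernel_prod:
  fixes R :: "('n::finite \<times> 'n) set"
  assumes "P \<in> model R \<mu>"
  obtains h where "\<And>v. is_kernel R \<mu> v (h v)" "P = density (PiM UNIV \<mu>) (kernel_prod R h UNIV)"
proof -
  from assms obtain h where k: "\<And>v. is_kernel R \<mu> v (h v)"
    and P: "P = density (joint_measure \<mu>) (\<lambda>x. ennreal (\<Prod>v\<in>UNIV. h v (x v) (restrict x (pa R v))))"
    unfolding model_def by blast
  show ?thesis using that[OF k] P kernel_prod_UNIV[OF k] by (simp add: joint_measure_def)
qed

section \<open>The local Markov property\<close>

lemma is_kernel_nn_integral_measurable:
  assumes "sigma_finite_measure (\<mu> v)" "is_kernel R \<mu> v k" "H \<in> borel_measurable (\<mu> v)"
  shows "(\<lambda>z. \<integral>\<^sup>+y. H y * ennreal (k y z) \<partial>\<mu> v) \<in> borel_measurable (PiM (pa R v) \<mu>)"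
proof -
  interpret sigma_finite_measure "\<mu> v" by (rule assms(1))
  have "(\<lambda>p. k (snd p) (fst p)) \<in> borel_measurable (PiM (pa R v) \<mu> \<Otimes>\<^sub>M \<mu> v)"
    using measurable_pair_swap[OF is_kernel_measurable[OF assms(2)]] by (simp add: case_prod_beta)
  then have "(\<lambda>(z, y). H y * ennreal (k y z)) \<in> borel_measurable (PiM (pa R v) \<mu> \<Otimes>\<^sub>M \<mu> v)"
    using assms(3) by (simp add: case_prod_beta') measurable
  then show ?thesis by (rule borel_measurable_nn_integral)
qed

text \<open>Given the other nodes of an ancestral set in which it is a sink, the conditional law of a
  node is its kernel at its parents.\<close>

lemma nn_integral_kernel_prod_local_Markov:
  fixes R :: "('n::finite \<times> 'n) set"
  assumes sf: "\<And>v. sigma_finite_measure (\<mu> v)" and k: "\<And>v. is_kernel R \<mu> v (h v)"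
    and acyc: "acyclic R" and A: "ancestral R A" and b: "b \<in> A" and sink: "\<And>c. c \<in> A \<Longrightarrow> (b, c) \<notin> R"
    and F: "F \<in> borel_measurable (PiM (A - {b}) \<mu>)" and H: "H \<in> borel_measurable (\<mu> b)"
  shows "(\<integral>\<^sup>+x. kernel_prod R h UNIV x * (F (restrict x (A - {b})) * H (x b)) \<partial>PiM UNIV \<mu>) =
    (\<integral>\<^sup>+x. kernel_prod R h UNIV x * (F (restrict x (A - {b})) *
      (\<integral>\<^sup>+y. H y * ennreal (h b y (restrict x (pa R b))) \<partial>\<mu> b)) \<partial>PiM UNIV \<mu>)"
proof -
  define Z where "Z = pa R b"
  have Z: "Z \<subseteq> A - {b}" using A b sink[OF b] by (auto simp: Z_def ancestral_def pa_def)
  define F1 where "F1 x = F (restrict x (A - {b})) * H (x b)" for x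
  define F2 where "F2 x = F (restrict x (A - {b})) *
      (\<integral>\<^sup>+y. H y * ennreal (h b y (restrict x Z)) \<partial>\<mu> b)" for x
  have FA: "(\<lambda>x. F (restrict x (A - {b}))) \<in> borel_measurable (PiM A \<mu>)"
    using measurable_comp[OF measurable_restrict_subset F] by (auto simp: comp_def)
  have "(\<lambda>x. \<integral>\<^sup>+y. H y * ennreal (h b y (restrict x Z)) \<partial>\<mu> b) \<in> borel_measurable (PiM A \<mu>)"
    using measurable_comp[OF measurable_restrict_subset
        is_kernel_nn_integral_measurable[OF sf k H, folded Z_def]] Z
    by (auto simp: comp_def)
  then have F12: "F1 \<in> borel_measurable (PiM A \<mu>)" "F2 \<in> borel_measurable (PiM A \<mu>)"
    unfolding F1_def F2_def using FA H b by measurable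
  have inner: "(\<integral>\<^sup>+y. ennreal (h b y (restrict x Z)) * F1 (x(b := y)) \<partial>\<mu> b) =
      (\<integral>\<^sup>+y. ennreal (h b y (restrict x Z)) * F2 (x(b := y)) \<partial>\<mu> b)"
    if x: "x \<in> space (PiM (A - {b}) \<mu>)" for x
  proof -
    have z: "restrict x Z \<in> space (PiM Z \<mu>)" using x Z by (auto simp: space_PiM PiE_iff)
    have hb: "(\<lambda>y. ennreal (h b y (restrict x Z))) \<in> borel_measurable (\<mu> b)"
      using is_kernel_measurable_slice[OF k z[unfolded Z_def]] by (simp add: Z_def)
    have upd: "F1 (x(b := y)) = F (restrict x (A - {b})) * H y" "F2 (x(b := y)) = F2 x" for y
      using Z by (simp_all add: F1_def F2_def restrict_fupd subset_Diff_insert)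
    have "(\<integral>\<^sup>+y. ennreal (h b y (restrict x Z)) * F1 (x(b := y)) \<partial>\<mu> b) = F2 x"
      unfolding upd F2_def using hb H
      by (subst nn_integral_cmult[symmetric]) (auto intro!: nn_integral_cong simp: ac_simps)
    also have "\<dots> = (\<integral>\<^sup>+y. ennreal (h b y (restrict x Z)) * F2 (x(b := y)) \<partial>\<mu> b)"
      using is_kernel_nn_integral_eq_1[OF k z[unfolded Z_def]] hb
      by (simp add: upd Z_def nn_integral_multc)
    finally show ?thesis .
  qed
  have "(\<integral>\<^sup>+x. kernel_prod R h UNIV x * F1 (restrict x A) \<partial>PiM UNIV \<mu>) =
      (\<integral>\<^sup>+x. kernel_prod R h UNIV x * F2 (restrict x A) \<partial>PiM UNIV \<mu>)"
    using nn_integral_kernel_prod_remove_sink[OF sf k A b sink] F12 inner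
    by (simp add: nn_integral_kernel_prod_marginal[OF sf k acyc A] Z_def cong: nn_integral_cong)
  moreover have restr: "restrict (restrict x A) (A - {b}) = restrict x (A - {b})"
    "restrict (restrict x A) Z = restrict x Z" "restrict x A b = x b" for x :: "'n \<Rightarrow> 'v"
    using Z b by (auto simp: restrict_def fun_eq_iff)
  ultimately show ?thesis
    unfolding Z_def[symmetric] by (simp only: F1_def F2_def restr)
qed

text \<open>Conditional independence of a sink \<open>b\<close> from a non-parent \<open>a\<close> given \<open>pa b\<close>: events of
  \<open>x\<^sub>a\<close> that no function of the values on \<open>pa b\<close> distinguishes stay indistinguishable jointly
  with \<open>x\<^sub>b\<close>.\<close>

lemma nn_integral_kernel_prod_sink_cong:
  fixes R :: "('n::finite \<times> 'n) set"
  assumes sf: "\<And>v. sigma_finite_measure (\<mu> v)" and k: "\<And>v. is_kernel R \<mu> v (h v)"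
    and acyc: "acyclic R" and A: "ancestral R A" and b: "b \<in> A" and sink: "\<And>c. c \<in> A \<Longrightarrow> (b, c) \<notin> R"
    and a: "a \<in> A" "a \<noteq> b" "a \<notin> pa R b"
    and T: "T0 \<in> sets (\<mu> a)" "T1 \<in> sets (\<mu> a)" and Sb: "Sb \<in> sets (\<mu> b)"
    and \<psi>: "\<psi> \<in> borel_measurable (PiM (pa R b) \<mu>)"
    and eq: "\<And>\<Phi>. \<Phi> \<in> borel_measurable (PiM (pa R b) \<mu>) \<Longrightarrow>
      (\<integral>\<^sup>+x. kernel_prod R h UNIV x * (indicator T0 (x a) * \<Phi> (restrict x (pa R b))) \<partial>PiM UNIV \<mu>) =
      (\<integral>\<^sup>+x. kernel_prod R h UNIV x * (indicator T1 (x a) * \<Phi> (restrict x (pa R b))) \<partial>PiM UNIV \<mu>)"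
  shows "(\<integral>\<^sup>+x. kernel_prod R h UNIV x *
      (indicator T0 (x a) * indicator Sb (x b) * \<psi> (restrict x (pa R b))) \<partial>PiM UNIV \<mu>) =
    (\<integral>\<^sup>+x. kernel_prod R h UNIV x *
      (indicator T1 (x a) * indicator Sb (x b) * \<psi> (restrict x (pa R b))) \<partial>PiM UNIV \<mu>)"
proof -
  define Z where "Z = pa R b"
  have Z: "Z \<subseteq> A - {b}" using A b sink[OF b] by (auto simp: Z_def ancestral_def pa_def)
  define \<Phi> where "\<Phi> z = \<psi> z * (\<integral>\<^sup>+y. indicator Sb y * ennreal (h b y z) \<partial>\<mu> b)" for z
  have \<Phi>: "\<Phi> \<in> borel_measurable (PiM Z \<mu>)"
    unfolding \<Phi>_def Z_def using \<psi> is_kernel_nn_integral_measurable[OF sf k, of "indicator Sb"] Sb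
    by measurable
  have Markov:
      "(\<integral>\<^sup>+x. kernel_prod R h UNIV x *
      (indicator T (x a) * indicator Sb (x b) * \<psi> (restrict x Z)) \<partial>PiM UNIV \<mu>) =
      (\<integral>\<^sup>+x. kernel_prod R h UNIV x * (indicator T (x a) * \<Phi> (restrict x Z)) \<partial>PiM UNIV \<mu>)"
    if T: "T \<in> sets (\<mu> a)" for T
  proof -
    define F where "F w = indicator T (w a) * \<psi> (restrict w Z)" for w :: "'n \<Rightarrow> _"
    have "F \<in> borel_measurable (PiM (A - {b}) \<mu>)"
      using measurable_comp[OF measurable_restrict_subset[OF Z] \<psi>[folded Z_def]] a T
      unfolding F_def by (simp add: comp_def) measurable
    from nn_integral_kernel_prod_local_Markov[OF sf k acyc A b sink this, of "indicator Sb"] Sb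
    have "(\<integral>\<^sup>+x. kernel_prod R h UNIV x *
        (F (restrict x (A - {b})) * indicator Sb (x b)) \<partial>PiM UNIV \<mu>) =
      (\<integral>\<^sup>+x. kernel_prod R h UNIV x * (F (restrict x (A - {b})) *
        (\<integral>\<^sup>+y. indicator Sb y * ennreal (h b y (restrict x Z)) \<partial>\<mu> b)) \<partial>PiM UNIV \<mu>)"
      by (simp add: Z_def)
    moreover have "Z \<inter> (A - {b}) = Z" using Z by blast
    ultimately show ?thesis
      using a by (simp add: F_def \<Phi>_def ac_simps)
  qed
  show ?thesis
    using Markov[OF T(1)] Markov[OF T(2)] eq[OF \<Phi>[unfolded Z_def]] by (simp add: Z_def)
qed

lemma model_subset_converse_sink_cong:
  fixes E :: "('n::finite \<times> 'n) set"
  assumes sf: "\<And>v. sigma_finite_measure (\<mu> v)" and acyc: "acyclic E"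
    and incl: "model E \<mu> \<subseteq> model (converse E) \<mu>" and k: "\<And>v. is_kernel E \<mu> v (k v)"
    and ab: "a \<noteq> b" "\<not> joined E a b" "(a, b) \<notin> E\<^sup>*"
    and T: "T0 \<in> sets (\<mu> a)" "T1 \<in> sets (\<mu> a)" and Sb: "Sb \<in> sets (\<mu> b)"
    and \<psi>: "\<psi> \<in> borel_measurable (PiM (ch E b) \<mu>)"
    and eq: "\<And>\<Phi>. \<Phi> \<in> borel_measurable (PiM (ch E b) \<mu>) \<Longrightarrow>
      (\<integral>\<^sup>+x. kernel_prod E k UNIV x * (indicator T0 (x a) * \<Phi> (restrict x (ch E b))) \<partial>PiM UNIV \<mu>) =
      (\<integral>\<^sup>+x. kernel_prod E k UNIV x * (indicator T1 (x a) * \<Phi> (restrict x (ch E b))) \<partial>PiM UNIV \<mu>)"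
  shows "(\<integral>\<^sup>+x. kernel_prod E k UNIV x *
      (indicator T0 (x a) * indicator Sb (x b) * \<psi> (restrict x (ch E b))) \<partial>PiM UNIV \<mu>) =
    (\<integral>\<^sup>+x. kernel_prod E k UNIV x *
      (indicator T1 (x a) * indicator Sb (x b) * \<psi> (restrict x (ch E b))) \<partial>PiM UNIV \<mu>)"
proof -
  define R where "R = converse E"
  define A where "A = ancestors R {a, b}"
  have paR: "pa R b = ch E b" by (auto simp: R_def pa_def ch_def)
  have acR: "acyclic R" using acyc by (simp add: R_def acyclic_converse)
  have A: "ancestral R A" "a \<in> A" "b \<in> A" "\<And>c. c \<in> A \<Longrightarrow> (b, c) \<notin> R"
    using ab(3) subset_ancestors[of "{a, b}" R] ancestral_ancestors ancestors_not_child[OF acR]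
    by (auto simp: A_def R_def rtrancl_converse)
  have a_pa: "a \<notin> pa R b" using ab(2) by (simp add: paR ch_def joined_def)
  obtain h where h: "\<And>v. is_kernel R \<mu> v (h v)"
    and dens: "density (PiM UNIV \<mu>) (kernel_prod E k UNIV) =
        density (PiM UNIV \<mu>) (kernel_prod R h UNIV)"
    using density_kernel_prod_in_model[OF sf acyc k] incl model_obtain_kernel_prod
    unfolding R_def by blast
  have fk: "kernel_prod E k UNIV \<in> borel_measurable (PiM UNIV \<mu>)"
    and gh: "kernel_prod R h UNIV \<in> borel_measurable (PiM UNIV \<mu>)"
    by (auto intro: kernel_prod_measurable[OF k] kernel_prod_measurable[OF h])
  have same: "(\<integral>\<^sup>+x. kernel_prod E k UNIV x * F x \<partial>PiM UNIV \<mu>) =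
      (\<integral>\<^sup>+x. kernel_prod R h UNIV x * F x \<partial>PiM UNIV \<mu>)"
    if "F \<in> borel_measurable (PiM UNIV \<mu>)" for F
    using nn_integral_density[OF fk that] nn_integral_density[OF gh that] dens by simp
  have \<Phi>: "(\<lambda>x. indicator T (x a) * \<Phi> (restrict x (ch E b))) \<in> borel_measurable (PiM UNIV \<mu>)"
    if "T \<in> sets (\<mu> a)" "\<Phi> \<in> borel_measurable (PiM (ch E b) \<mu>)" for T and \<Phi> :: "_ \<Rightarrow> ennreal"
    using measurable_comp[OF measurable_restrict_subset that(2)] that(1)
    by (simp add: comp_def) measurable
  have "(\<integral>\<^sup>+x. kernel_prod R h UNIV x *
      (indicator T0 (x a) * indicator Sb (x b) * \<psi> (restrict x (pa R b))) \<partial>PiM UNIV \<mu>) =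
      (\<integral>\<^sup>+x. kernel_prod R h UNIV x *
          (indicator T1 (x a) * indicator Sb (x b) * \<psi> (restrict x (pa R b))) \<partial>PiM UNIV \<mu>)"
  proof (rule nn_integral_kernel_prod_sink_cong[OF sf h acR A(1,3,4) A(2) ab(1) a_pa T Sb])
    show "\<psi> \<in> borel_measurable (PiM (pa R b) \<mu>)" using \<psi> by (simp add: paR)
    show "(\<integral>\<^sup>+x. kernel_prod R h UNIV x *
        (indicator T0 (x a) * \<Phi> (restrict x (pa R b))) \<partial>PiM UNIV \<mu>) =
      (\<integral>\<^sup>+x. kernel_prod R h UNIV x * (indicator T1 (x a) * \<Phi> (restrict x (pa R b))) \<partial>PiM UNIV \<mu>)"
      if "\<Phi> \<in> borel_measurable (PiM (pa R b) \<mu>)" for \<Phi>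
      using that eq[of \<Phi>] same[OF \<Phi>[OF T(1)]] same[OF \<Phi>[OF T(2)]] by (simp add: paR)
  qed
  moreover have "(\<lambda>x. indicator T (x a) * indicator Sb (x b) * \<psi> (restrict x (ch E b))) \<in>
      borel_measurable (PiM UNIV \<mu>)"
    if "T \<in> sets (\<mu> a)" for T
    using measurable_comp[OF measurable_restrict_subset \<psi>] that Sb
    by (simp add: comp_def) measurable
  ultimately show ?thesis
    using same T by (simp add: paR)
qed

section \<open>Factorizations over complete sets\<close>

definition factor_prod :: "('n set \<times> (('n \<Rightarrow> 'v) \<Rightarrow> ennreal)) list \<Rightarrow> ('n \<Rightarrow> 'v) \<Rightarrow> ennreal" where
  "factor_prod fs x = prod_list (map (\<lambda>(C, \<phi>). \<phi> (restrict x C)) fs)"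

definition complete_factors ::
  "('n \<times> 'n) set \<Rightarrow> ('n \<Rightarrow> 'v measure) \<Rightarrow> 'n set \<Rightarrow> ('n set \<times> (('n \<Rightarrow> 'v) \<Rightarrow> ennreal)) list \<Rightarrow> bool"
  where "complete_factors R \<mu> S fs \<longleftrightarrow>
    (\<forall>(C, \<phi>)\<in>set fs. C \<subseteq> S \<and> complete_set R C \<and> \<phi> \<in> borel_measurable (PiM C \<mu>))"

definition kernel_representable ::
  "('n \<times> 'n) set \<Rightarrow> ('n \<Rightarrow> 'v measure) \<Rightarrow> 'n set \<Rightarrow> ('n set \<times> (('n \<Rightarrow> 'v) \<Rightarrow> ennreal)) list \<Rightarrow> bool"
  where "kernel_representable R \<mu> S fs \<longleftrightarrow> (\<exists>h. (\<forall>v. is_kernel R \<mu> v (h v)) \<and>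
    (\<forall>G \<in> borel_measurable (PiM S \<mu>).
      (\<integral>\<^sup>+x. factor_prod fs x * G x \<partial>PiM S \<mu>) = (\<integral>\<^sup>+x. kernel_prod R h S x * G x \<partial>PiM S \<mu>)))"

lemma factor_prod_simps [simp]:
  "factor_prod [] x = 1"
  "factor_prod ((C, \<phi>) # fs) x = \<phi> (restrict x C) * factor_prod fs x"
  "factor_prod (fs @ gs) x = factor_prod fs x * factor_prod gs x"
  by (simp_all add: factor_prod_def)

lemma factor_prod_filter:
  "factor_prod fs x = factor_prod (filter P fs) x * factor_prod (filter (\<lambda>p. \<not> P p) fs) x"
  by (induction fs) (auto simp: mult_ac)

lemma factor_prod_measurable:
  "(\<And>C \<phi>. (C, \<phi>) \<in> set fs \<Longrightarrow> C \<subseteq> S \<and> \<phi> \<in> borel_measurable (PiM C \<mu>)) \<Longrightarrow>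
    factor_prod fs \<in> borel_measurable (PiM S \<mu>)"
proof (induction fs)
  case (Cons p fs)
  obtain C \<phi> where p: "p = (C, \<phi>)" by force
  have "C \<subseteq> S" "\<phi> \<in> borel_measurable (PiM C \<mu>)" using Cons.prems p by auto
  then have "(\<lambda>x. \<phi> (restrict x C)) \<in> borel_measurable (PiM S \<mu>)"
    using measurable_comp[OF measurable_restrict_subset] by (auto simp: comp_def)
  moreover have "factor_prod fs \<in> borel_measurable (PiM S \<mu>)" using Cons by auto
  ultimately show ?case unfolding p factor_prod_simps by measurable
qed (simp add: factor_prod_def[abs_def])

lemma factor_prod_cong:
  "(\<And>C \<phi>. (C, \<phi>) \<in> set fs \<Longrightarrow> C \<subseteq> T) \<Longrightarrow> (\<And>i. i \<in> T \<Longrightarrow> x i = x' i) \<Longrightarrow>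
    factor_prod fs x = factor_prod fs x'"
proof (induction fs)
  case (Cons p fs)
  obtain C \<phi> where p: "p = (C, \<phi>)" by force
  have "restrict x C = restrict x' C"
    using Cons.prems p by (intro restrict_ext) auto
  moreover have "factor_prod fs x = factor_prod fs x'"
    using Cons.IH Cons.prems by auto
  ultimately show ?case using p by simp
qed simp

lemma factor_prod_fun_upd_measurable:
  assumes "\<And>C \<phi>. (C, \<phi>) \<in> set fs \<Longrightarrow> C \<subseteq> insert t P \<and> \<phi> \<in> borel_measurable (PiM C \<mu>)" "t \<notin> P"
  shows "(\<lambda>(y, z). factor_prod fs (z(t := y))) \<in> borel_measurable (\<mu> t \<Otimes>\<^sub>M PiM P \<mu>)"
proof -
  have "(\<lambda>(z, y). factor_prod fs (z(t := y))) \<in> borel_measurable (PiM P \<mu> \<Otimes>\<^sub>M \<mu> t)"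
    using measurable_comp[OF measurable_add_dim[of t P \<mu>] factor_prod_measurable[OF assms(1)]]
    by (simp add: comp_def case_prod_beta')
  from measurable_pair_swap[OF this] show ?thesis by (simp add: case_prod_beta')
qed

lemma nn_integral_factor_prod_remove:
  fixes \<mu> :: "'n::finite \<Rightarrow> 'v measure"
  assumes sf: "\<And>v. sigma_finite_measure (\<mu> v)" and t: "t \<in> S" and P: "P \<subseteq> S - {t}"
    and fsT: "\<And>C \<phi>. (C, \<phi>) \<in> set fsT \<Longrightarrow> C \<subseteq> insert t P \<and> \<phi> \<in> borel_measurable (PiM C \<mu>)"
    and fsR: "\<And>C \<phi>. (C, \<phi>) \<in> set fsR \<Longrightarrow> C \<subseteq> S - {t} \<and> \<phi> \<in> borel_measurable (PiM C \<mu>)"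
    and G: "G \<in> borel_measurable (PiM S \<mu>)"
  shows "(\<integral>\<^sup>+x. factor_prod (fsT @ fsR) x * G x \<partial>PiM S \<mu>) =
    (\<integral>\<^sup>+x. factor_prod fsR x *
      (\<integral>\<^sup>+y. factor_prod fsT ((restrict x P)(t := y)) * G (x(t := y)) \<partial>\<mu> t) \<partial>PiM (S - {t}) \<mu>)"
proof (rule product_nn_integral_remove_factor[OF sf t _ G])
  have "C \<subseteq> S \<and> \<phi> \<in> borel_measurable (PiM C \<mu>)" if "(C, \<phi>) \<in> set (fsT @ fsR)" for C \<phi>
    using that fsT[of C \<phi>] fsR[of C \<phi>] P t by auto
  then show "factor_prod (fsT @ fsR) \<in> borel_measurable (PiM S \<mu>)"
    by (rule factor_prod_measurable)
  fix x y assume x: "x \<in> space (PiM (S - {t}) \<mu>)"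
  have "factor_prod fsT (x(t := y)) = factor_prod fsT ((restrict x P)(t := y))"
    using fsT P by (intro factor_prod_cong[of fsT "insert t P"]) auto
  moreover have "factor_prod fsR (x(t := y)) = factor_prod fsR x"
    using fsR by (intro factor_prod_cong[of fsR "S - {t}"]) auto
  ultimately show "factor_prod (fsT @ fsR) (x(t := y)) = factor_prod fsR x *
      factor_prod fsT ((restrict x P)(t := y))"
    by (simp add: mult.commute)
  have a: "(\<lambda>(y, z). factor_prod fsT (z(t := y))) \<in> borel_measurable (\<mu> t \<Otimes>\<^sub>M PiM P \<mu>)"
    using fsT P by (intro factor_prod_fun_upd_measurable) auto
  have "restrict x P \<in> space (PiM P \<mu>)" using x P by (auto simp: space_PiM PiE_iff)
  from measurable_Pair1[OF a this]
  show "(\<lambda>y. factor_prod fsT ((restrict x P)(t := y))) \<in> borel_measurable (\<mu> t)"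
    by simp
qed

lemma nn_integral_factor_prod_fun_upd_measurable:
  assumes "sigma_finite_measure (\<mu> t)" "t \<notin> P"
    and "\<And>C \<phi>. (C, \<phi>) \<in> set fs \<Longrightarrow> C \<subseteq> insert t P \<and> \<phi> \<in> borel_measurable (PiM C \<mu>)"
  shows "(\<lambda>z. \<integral>\<^sup>+y. factor_prod fs (z(t := y)) \<partial>\<mu> t) \<in> borel_measurable (PiM P \<mu>)"
proof -
  have "(\<lambda>(y, z). factor_prod fs (z(t := y))) \<in> borel_measurable (\<mu> t \<Otimes>\<^sub>M PiM P \<mu>)"
    using assms(2,3) by (intro factor_prod_fun_upd_measurable) auto
  from measurable_pair_swap[OF this] show ?thesis
    by (intro sigma_finite_measure.borel_measurable_nn_integral[OF assms(1)])
        (simp add: case_prod_beta')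
qed

lemma nn_integral_factor_prod_marginal:
  fixes \<mu> :: "'n::finite \<Rightarrow> 'v measure"
  assumes sf: "\<And>v. sigma_finite_measure (\<mu> v)" and t: "t \<in> S" and P: "P \<subseteq> S - {t}"
    and fsT: "\<And>C \<phi>. (C, \<phi>) \<in> set fsT \<Longrightarrow> C \<subseteq> insert t P \<and> \<phi> \<in> borel_measurable (PiM C \<mu>)"
    and fsR: "\<And>C \<phi>. (C, \<phi>) \<in> set fsR \<Longrightarrow> C \<subseteq> S - {t} \<and> \<phi> \<in> borel_measurable (PiM C \<mu>)"
  shows "(\<integral>\<^sup>+x. factor_prod ((P, \<lambda>z. \<integral>\<^sup>+y. factor_prod fsT (z(t := y)) \<partial>\<mu> t) # fsR) x
      \<partial>PiM (S - {t}) \<mu>) =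
    (\<integral>\<^sup>+x. factor_prod (fsT @ fsR) x \<partial>PiM S \<mu>)"
proof -
  have "(\<integral>\<^sup>+x. factor_prod (fsT @ fsR) x * 1 \<partial>PiM S \<mu>) =
      (\<integral>\<^sup>+x. factor_prod fsR x *
          (\<integral>\<^sup>+y. factor_prod fsT ((restrict x P)(t := y)) * 1 \<partial>\<mu> t) \<partial>PiM (S - {t}) \<mu>)"
    using fsT fsR by (intro nn_integral_factor_prod_remove[OF sf t P]) auto
  then show ?thesis by (simp add: mult.commute)
qed

lemma factor_prod_split_sink:
  assumes fs: "complete_factors R \<mu> S fs" and sink: "\<And>c. c \<in> S \<Longrightarrow> (t, c) \<notin> R"
  obtains fsT fsR where "factor_prod fs = factor_prod (fsT @ fsR)"
    and "\<And>C \<phi>. (C, \<phi>) \<in> set fsT \<Longrightarrow> C \<subseteq> insert t (pa R t) \<and> \<phi> \<in> borel_measurable (PiM C \<mu>)"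
    and "complete_factors R \<mu> (S - {t}) fsR"
proof
  let ?P = "\<lambda>(C, \<phi>). t \<in> C"
  show "factor_prod fs = factor_prod (filter ?P fs @ filter (\<lambda>p. \<not> ?P p) fs)"
    by (intro ext) (simp only: factor_prod_simps(3) factor_prod_filter[symmetric])
  show "C \<subseteq> insert t (pa R t) \<and> \<phi> \<in> borel_measurable (PiM C \<mu>)" if "(C, \<phi>) \<in> set (filter ?P fs)"
    for C \<phi>
    using that fs sink by (fastforce simp: complete_factors_def complete_set_def joined_def pa_def)
  show "complete_factors R \<mu> (S - {t}) (filter (\<lambda>p. \<not> ?P p) fs)"
    using fs by (auto simp: complete_factors_def)
qed

text \<open>The conditional density \<open>a y z / \<integral>a w z dw\<close>; where the normalizing integral is \<open>0\<close> or
  \<open>\<infinity>\<close> the default density \<open>d\<close> is used instead.\<close>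

definition normalized_kernel ::
  "'v measure \<Rightarrow> ('v \<Rightarrow> real) \<Rightarrow> ('v \<Rightarrow> 'z \<Rightarrow> ennreal) \<Rightarrow> 'v \<Rightarrow> 'z \<Rightarrow> real" where
  "normalized_kernel M d a y z =
    (let m = \<integral>\<^sup>+w. a w z \<partial>M in if m = 0 \<or> m = \<top> then d y else enn2real (a y z / m))"

lemma nn_integral_normalized_kernel:
  assumes a: "(\<lambda>y. a y z) \<in> borel_measurable M" and g: "g \<in> borel_measurable M"
    and fin: "(\<integral>\<^sup>+y. a y z \<partial>M) \<noteq> \<top>"
  shows "(\<integral>\<^sup>+y. a y z \<partial>M) * (\<integral>\<^sup>+y. ennreal (normalized_kernel M d a y z) * g y \<partial>M) =
    (\<integral>\<^sup>+y. a y z * g y \<partial>M)"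
proof (cases "(\<integral>\<^sup>+y. a y z \<partial>M) = 0")
  case True
  then have "AE y in M. a y z = 0" using nn_integral_0_iff_AE[OF a] by simp
  then have "(\<integral>\<^sup>+y. a y z * g y \<partial>M) = 0"
    using a g by (subst nn_integral_0_iff_AE) (auto elim!: AE_mp)
  then show ?thesis using True by simp
next
  case False
  define m where "m = (\<integral>\<^sup>+y. a y z \<partial>M)"
  have m: "m \<noteq> 0" "m \<noteq> \<top>" using False fin by (simp_all add: m_def)
  have "AE y in M. a y z \<noteq> \<top>" using nn_integral_PInf_AE[OF a] fin by simp
  then have "AE y in M. ennreal (normalized_kernel M d a y z) * g y = a y z * g y / m"
    by eventually_elim
      (use m in \<open>simp add: normalized_kernel_def m_def[symmetric] ennreal_divide_eq_top_iff
        ennreal_enn2real_if ennreal_times_divide mult.commute\<close>)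
  then have "(\<integral>\<^sup>+y. ennreal (normalized_kernel M d a y z) * g y \<partial>M) = (\<integral>\<^sup>+y. a y z * g y \<partial>M) / m"
    using a g by (simp add: nn_integral_cong_AE nn_integral_divide)
  then show ?thesis
    using m
    by (simp add: m_def[symmetric] ennreal_times_divide mult_divide_eq_ennreal mult.commute[of m])
qed

lemma is_kernel_normalized_kernel:
  assumes sf: "sigma_finite_measure (\<mu> t)"
    and a: "(\<lambda>(y, z). a y z) \<in> borel_measurable (\<mu> t \<Otimes>\<^sub>M PiM (pa R t) \<mu>)"
    and d: "is_kernel R \<mu> t (\<lambda>y z. d y)"
  shows "is_kernel R \<mu> t (normalized_kernel (\<mu> t) d a)"
  unfolding is_kernel_def
proof (intro conjI allI ballI)
  interpret sigma_finite_measure "\<mu> t" by (rule sf)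
  show "0 \<le> normalized_kernel (\<mu> t) d a y z" for y z
    using is_kernel_nonneg[OF d] by (simp add: normalized_kernel_def Let_def)
  have [measurable]: "(\<lambda>p. a (fst p) (snd p)) \<in> borel_measurable (\<mu> t \<Otimes>\<^sub>M PiM (pa R t) \<mu>)"
    using a by (simp add: case_prod_beta')
  have "(\<lambda>(z, y). a y z) \<in> borel_measurable (PiM (pa R t) \<mu> \<Otimes>\<^sub>M \<mu> t)"
    using measurable_pair_swap[OF a] by (simp add: case_prod_beta')
  from borel_measurable_nn_integral[OF this]
  have "(\<lambda>p. \<integral>\<^sup>+w. a w (snd p) \<partial>\<mu> t) \<in> borel_measurable (\<mu> t \<Otimes>\<^sub>M PiM (pa R t) \<mu>)"
    by measurable
  moreover have "(\<lambda>p. d (fst p)) \<in> borel_measurable (\<mu> t \<Otimes>\<^sub>M PiM (pa R t) \<mu>)"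
    using is_kernel_measurable[OF d] by (simp add: case_prod_beta')
  ultimately show "(\<lambda>(y, z). normalized_kernel (\<mu> t) d a y z) \<in>
      borel_measurable (\<mu> t \<Otimes>\<^sub>M PiM (pa R t) \<mu>)"
    unfolding normalized_kernel_def Let_def case_prod_beta' by measurable
  fix z assume z: "z \<in> space (PiM (pa R t) \<mu>)"
  show "(\<integral>\<^sup>+y. ennreal (normalized_kernel (\<mu> t) d a y z) \<partial>\<mu> t) = 1"
  proof (cases "(\<integral>\<^sup>+w. a w z \<partial>\<mu> t) = 0 \<or> (\<integral>\<^sup>+w. a w z \<partial>\<mu> t) = \<top>")
    case True
    then show ?thesis using is_kernel_nn_integral_eq_1[OF d z] by (simp add: normalized_kernel_def)
  next
    case False
    define m where "m = (\<integral>\<^sup>+w. a w z \<partial>\<mu> t)"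
    define X where "X = (\<integral>\<^sup>+y. ennreal (normalized_kernel (\<mu> t) d a y z) \<partial>\<mu> t)"
    have m: "m \<noteq> 0" "m \<noteq> \<top>" using False by (simp_all add: m_def)
    have "(\<lambda>y. a y z) \<in> borel_measurable (\<mu> t)"
      using measurable_Pair1[OF a z] by simp
    from nn_integral_normalized_kernel[where a = a and z = z and g = "\<lambda>_. 1" and d = d, OF this] m
    have "X * m = m" by (simp add: m_def X_def mult.commute)
    then have "X = m / m" using m by (metis mult_divide_eq_ennreal)
    then show ?thesis using m by (simp add: X_def top.not_eq_extremum)
  qed
qed

lemma nn_integral_factor_prod_normalized_kernel:
  fixes \<mu> :: "'n::finite \<Rightarrow> 'v measure" and a :: "'v \<Rightarrow> ('n \<Rightarrow> 'v) \<Rightarrow> ennreal" and t :: 'n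
  defines "m \<equiv> \<lambda>z. \<integral>\<^sup>+y. a y z \<partial>\<mu> t"
  assumes sf: "\<And>v. sigma_finite_measure (\<mu> v)" and t: "t \<in> S" and P: "P \<subseteq> S - {t}"
    and fsR: "\<And>C \<phi>. (C, \<phi>) \<in> set fsR \<Longrightarrow> C \<subseteq> S - {t} \<and> \<phi> \<in> borel_measurable (PiM C \<mu>)"
    and a: "(\<lambda>(y, z). a y z) \<in> borel_measurable (\<mu> t \<Otimes>\<^sub>M PiM P \<mu>)"
    and fin: "(\<integral>\<^sup>+x. factor_prod ((P, m) # fsR) x \<partial>PiM (S - {t}) \<mu>) \<noteq> \<top>"
    and G: "G \<in> borel_measurable (PiM S \<mu>)"
  shows "(\<integral>\<^sup>+x. factor_prod ((P, m) # fsR) x *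
      (\<integral>\<^sup>+y. ennreal (normalized_kernel (\<mu> t) d a y (restrict x P)) * G (x(t := y)) \<partial>\<mu> t)
          \<partial>PiM (S - {t}) \<mu>) =
    (\<integral>\<^sup>+x. factor_prod fsR x * (\<integral>\<^sup>+y. a y (restrict x P) * G (x(t := y)) \<partial>\<mu> t) \<partial>PiM (S - {t}) \<mu>)"
proof (rule nn_integral_cong_AE)
  interpret sigma_finite_measure "\<mu> t" by (rule sf)
  have "m \<in> borel_measurable (PiM P \<mu>)"
    unfolding m_def using measurable_pair_swap[OF a]
    by (intro borel_measurable_nn_integral) (simp add: case_prod_beta')
  then have fm: "factor_prod ((P, m) # fsR) \<in> borel_measurable (PiM (S - {t}) \<mu>)"
    using fsR P by (intro factor_prod_measurable) auto
  from nn_integral_PInf_AE[OF fm fin[folded infinity_ennreal_def]]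
  have "AE x in PiM (S - {t}) \<mu>. factor_prod ((P, m) # fsR) x \<noteq> \<top>" by simp
  then show "AE x in PiM (S - {t}) \<mu>. factor_prod ((P, m) # fsR) x *
      (\<integral>\<^sup>+y. ennreal (normalized_kernel (\<mu> t) d a y (restrict x P)) * G (x(t := y)) \<partial>\<mu> t) =
    factor_prod fsR x * (\<integral>\<^sup>+y. a y (restrict x P) * G (x(t := y)) \<partial>\<mu> t)"
  proof (rule AE_mp, intro AE_I2 impI)
    fix x assume x: "x \<in> space (PiM (S - {t}) \<mu>)" and fin_x: "factor_prod ((P, m) # fsR) x \<noteq> \<top>"
    have "restrict x P \<in> space (PiM P \<mu>)" using x P by (auto simp: space_PiM PiE_iff)
    then have a_x: "(\<lambda>y. a y (restrict x P)) \<in> borel_measurable (\<mu> t)"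
      using measurable_Pair1[OF a] by simp
    have "(\<lambda>y. x(t := y)) \<in> measurable (\<mu> t) (PiM S \<mu>)"
      using measurable_component_update[OF x, of t] t by (simp add: insert_absorb)
    then have G_x: "(\<lambda>y. G (x(t := y))) \<in> borel_measurable (\<mu> t)"
      using measurable_comp[OF _ G] by (simp add: comp_def)
    show "factor_prod ((P, m) # fsR) x *
        (\<integral>\<^sup>+y. ennreal (normalized_kernel (\<mu> t) d a y (restrict x P)) * G (x(t := y)) \<partial>\<mu> t) =
      factor_prod fsR x * (\<integral>\<^sup>+y. a y (restrict x P) * G (x(t := y)) \<partial>\<mu> t)"
    proof (cases "m (restrict x P) = \<top>")
      case True
      then show ?thesis using fin_x by (simp add: ennreal_mult_eq_top_iff)
    next
      case False
      from nn_integral_normalized_kernel[where a = a and z = "restrict x P" and d = d, OF a_x G_x]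
        False
      show ?thesis by (simp add: m_def mult_ac)
    qed
  qed
qed

lemma nn_integral_factor_prod_extend_kernel_prod:
  fixes R :: "('n::finite \<times> 'n) set" and \<mu> :: "'n \<Rightarrow> 'v measure"
    and fsT :: "('n set \<times> (('n \<Rightarrow> 'v) \<Rightarrow> ennreal)) list" and t :: 'n
  defines "a \<equiv> \<lambda>y z. factor_prod fsT (z(t := y))"
  defines "m \<equiv> \<lambda>z. \<integral>\<^sup>+y. a y z \<partial>\<mu> t"
  assumes sf: "\<And>v. sigma_finite_measure (\<mu> v)" and S: "ancestral R S" and t: "t \<in> S"
    and sink: "\<And>c. c \<in> S \<Longrightarrow> (t, c) \<notin> R"
    and fsT: "\<And>C \<phi>. (C, \<phi>) \<in> set fsT \<Longrightarrow> C \<subseteq> insert t (pa R t) \<and> \<phi> \<in> borel_measurable (PiM C \<mu>)"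
    and fsR: "\<And>C \<phi>. (C, \<phi>) \<in> set fsR \<Longrightarrow> C \<subseteq> S - {t} \<and> \<phi> \<in> borel_measurable (PiM C \<mu>)"
    and d: "is_kernel R \<mu> t (\<lambda>y z. d y)" and h: "\<And>v. is_kernel R \<mu> v (h v)"
    and tot: "(\<integral>\<^sup>+x. factor_prod ((pa R t, m) # fsR) x \<partial>PiM (S - {t}) \<mu>) = 1"
    and hG: "\<And>G. G \<in> borel_measurable (PiM (S - {t}) \<mu>) \<Longrightarrow>
      (\<integral>\<^sup>+x. factor_prod ((pa R t, m) # fsR) x * G x \<partial>PiM (S - {t}) \<mu>) =
      (\<integral>\<^sup>+x. kernel_prod R h (S - {t}) x * G x \<partial>PiM (S - {t}) \<mu>)"
    and G: "G \<in> borel_measurable (PiM S \<mu>)"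
  shows "(\<integral>\<^sup>+x. factor_prod (fsT @ fsR) x * G x \<partial>PiM S \<mu>) =
    (\<integral>\<^sup>+x. kernel_prod R (h(t := normalized_kernel (\<mu> t) d a)) S x * G x \<partial>PiM S \<mu>)"
proof -
  define P where "P = pa R t"
  define h' where "h' = h(t := normalized_kernel (\<mu> t) d a)"
  define \<Gamma> where "\<Gamma> x = (\<integral>\<^sup>+y. ennreal (h' t y (restrict x P)) * G (x(t := y)) \<partial>\<mu> t)" for x
  have P: "P \<subseteq> S - {t}" using S t sink[OF t] by (auto simp: P_def ancestral_def pa_def)
  have a: "(\<lambda>(y, z). a y z) \<in> borel_measurable (\<mu> t \<Otimes>\<^sub>M PiM P \<mu>)"
    unfolding a_def using fsT P by (intro factor_prod_fun_upd_measurable) (auto simp: P_def)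
  have h': "\<And>v. is_kernel R \<mu> v (h' v)"
    using h is_kernel_normalized_kernel[OF sf a[unfolded P_def] d] by (simp add: h'_def)
  have \<Gamma>: "\<Gamma> \<in> borel_measurable (PiM (S - {t}) \<mu>)"
  proof -
    interpret sigma_finite_measure "\<mu> t" by (rule sf)
    have "(\<lambda>p. (snd p, restrict (fst p) P)) \<in>
        measurable (PiM (S - {t}) \<mu> \<Otimes>\<^sub>M \<mu> t) (\<mu> t \<Otimes>\<^sub>M PiM P \<mu>)"
      using P
      by (intro measurable_Pair measurable_snd
          measurable_compose[OF measurable_fst measurable_restrict_subset])
    from measurable_comp[OF this is_kernel_measurable[OF h', of t, folded P_def]]
    have [measurable]: "(\<lambda>p. h' t (snd p) (restrict (fst p) P)) \<in>
        borel_measurable (PiM (S - {t}) \<mu> \<Otimes>\<^sub>M \<mu> t)"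
      by (simp add: comp_def)
    have "G \<in> borel_measurable (PiM (insert t (S - {t})) \<mu>)" using G t by (simp add: insert_absorb)
    from measurable_comp[OF measurable_add_dim[of t "S - {t}" \<mu>] this]
    have [measurable]: "(\<lambda>p. G ((fst p)(t := snd p))) \<in> borel_measurable (PiM (S - {t}) \<mu> \<Otimes>\<^sub>M \<mu> t)"
      by (simp add: comp_def case_prod_beta')
    have "(\<lambda>(x, y). ennreal (h' t y (restrict x P)) * G (x(t := y)))
        \<in> borel_measurable (PiM (S - {t}) \<mu> \<Otimes>\<^sub>M \<mu> t)"
      unfolding case_prod_beta' by measurable
    then show ?thesis unfolding \<Gamma>_def[abs_def] by (rule borel_measurable_nn_integral)
  qed
  have "kernel_prod R h' (S - {t}) = kernel_prod R h (S - {t})"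
    unfolding kernel_prod_def h'_def by (intro ext prod.cong) auto
  then have "(\<integral>\<^sup>+x. kernel_prod R h' S x * G x \<partial>PiM S \<mu>) =
      (\<integral>\<^sup>+x. kernel_prod R h (S - {t}) x * \<Gamma> x \<partial>PiM (S - {t}) \<mu>)"
    using nn_integral_kernel_prod_remove_sink[OF sf h' S t sink G] by (simp add: \<Gamma>_def P_def)
  also have "\<dots> = (\<integral>\<^sup>+x. factor_prod ((P, m) # fsR) x * \<Gamma> x \<partial>PiM (S - {t}) \<mu>)"
    using hG[OF \<Gamma>] by (simp add: P_def)
  also have "\<dots> =
      (\<integral>\<^sup>+x. factor_prod fsR x * (\<integral>\<^sup>+y. a y (restrict x P) * G (x(t := y)) \<partial>\<mu> t) \<partial>PiM (S - {t}) \<mu>)"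
    unfolding \<Gamma>_def P_def h'_def fun_upd_same using tot
    by (intro nn_integral_factor_prod_normalized_kernel[OF sf t P[unfolded P_def] fsR
          a[unfolded P_def] _ G, folded m_def]) simp_all
  also have "\<dots> = (\<integral>\<^sup>+x. factor_prod (fsT @ fsR) x * G x \<partial>PiM S \<mu>)"
    unfolding a_def using fsT
    by (intro nn_integral_factor_prod_remove[OF sf t P _ fsR G, symmetric]) (auto simp: P_def)
  finally show ?thesis by (simp add: h'_def)
qed

lemma kernel_representable_Diff_sink:
  fixes R :: "('n::finite \<times> 'n) set" and \<mu> :: "'n \<Rightarrow> 'v measure"
  assumes sf: "\<And>v. sigma_finite_measure (\<mu> v)"
    and pa_complete: "\<And>v. complete_set R (pa R v)" and d: "\<And>v. is_kernel R \<mu> v (\<lambda>y z. d v y)"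
    and S: "ancestral R S" and t: "t \<in> S" and sink: "\<And>c. c \<in> S \<Longrightarrow> (t, c) \<notin> R"
    and fs: "complete_factors R \<mu> S fs" and tot: "(\<integral>\<^sup>+x. factor_prod fs x \<partial>PiM S \<mu>) = 1"
    and IH: "\<And>fs'. complete_factors R \<mu> (S - {t}) fs' \<Longrightarrow>
      (\<integral>\<^sup>+x. factor_prod fs' x \<partial>PiM (S - {t}) \<mu>) = 1 \<Longrightarrow> kernel_representable R \<mu> (S - {t}) fs'"
  shows "kernel_representable R \<mu> S fs"
proof -
  have P: "pa R t \<subseteq> S - {t}" using S t sink[OF t] by (auto simp: ancestral_def pa_def)
  obtain fsT fsR where fs_eq: "factor_prod fs = factor_prod (fsT @ fsR)"
    and fsT: "\<And>C \<phi>. (C, \<phi>) \<in> set fsT \<Longrightarrow> C \<subseteq> insert t (pa R t) \<and> \<phi> \<in> borel_measurable (PiM C \<mu>)"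
    and fsR: "complete_factors R \<mu> (S - {t}) fsR"
    using factor_prod_split_sink[OF fs sink] by blast
  have fsR': "C \<subseteq> S - {t} \<and> \<phi> \<in> borel_measurable (PiM C \<mu>)" if "(C, \<phi>) \<in> set fsR" for C \<phi>
    using fsR that by (auto simp: complete_factors_def)
  define m where "m z = (\<integral>\<^sup>+y. factor_prod fsT (z(t := y)) \<partial>\<mu> t)" for z
  have "m \<in> borel_measurable (PiM (pa R t) \<mu>)"
    unfolding m_def[abs_def] using fsT P
    by (intro nn_integral_factor_prod_fun_upd_measurable sf) auto
  then have marginal: "complete_factors R \<mu> (S - {t}) ((pa R t, m) # fsR)"
    using fsR P pa_complete by (simp add: complete_factors_def)
  have "(\<integral>\<^sup>+x. factor_prod ((pa R t, m) # fsR) x \<partial>PiM (S - {t}) \<mu>) =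
      (\<integral>\<^sup>+x. factor_prod (fsT @ fsR) x \<partial>PiM S \<mu>)"
    unfolding m_def[abs_def] using fsT fsR'
    by (intro nn_integral_factor_prod_marginal[OF sf t P]) auto
  then have tot': "(\<integral>\<^sup>+x. factor_prod ((pa R t, m) # fsR) x \<partial>PiM (S - {t}) \<mu>) = 1"
    using tot by (simp add: fs_eq)
  obtain h where h: "\<And>v. is_kernel R \<mu> v (h v)"
    and hG: "\<And>G. G \<in> borel_measurable (PiM (S - {t}) \<mu>) \<Longrightarrow>
      (\<integral>\<^sup>+x. factor_prod ((pa R t, m) # fsR) x * G x \<partial>PiM (S - {t}) \<mu>) =
      (\<integral>\<^sup>+x. kernel_prod R h (S - {t}) x * G x \<partial>PiM (S - {t}) \<mu>)"
    using IH[OF marginal tot'] by (auto simp: kernel_representable_def)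
  define k where "k = normalized_kernel (\<mu> t) (d t) (\<lambda>y z. factor_prod fsT (z(t := y)))"
  have "(\<lambda>(y, z). factor_prod fsT (z(t := y))) \<in> borel_measurable (\<mu> t \<Otimes>\<^sub>M PiM (pa R t) \<mu>)"
    using fsT P by (intro factor_prod_fun_upd_measurable) auto
  then have "is_kernel R \<mu> v ((h(t := k)) v)" for v
    using h is_kernel_normalized_kernel[OF sf _ d] by (simp add: k_def)
  moreover have "(\<integral>\<^sup>+x. factor_prod fs x * G x \<partial>PiM S \<mu>) =
      (\<integral>\<^sup>+x. kernel_prod R (h(t := k)) S x * G x \<partial>PiM S \<mu>)"
    if "G \<in> borel_measurable (PiM S \<mu>)" for G
    unfolding fs_eq k_def
    by (rule nn_integral_factor_prod_extend_kernel_prod[OF sf S t sink _ _ d[of t] h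
        tot'[unfolded m_def] hG[unfolded m_def] that]) (use fsT fsR' in auto)
  ultimately show ?thesis unfolding kernel_representable_def by blast
qed

lemma kernel_representable_if_complete_factors:
  fixes R :: "('n::finite \<times> 'n) set" and \<mu> :: "'n \<Rightarrow> 'v measure"
  assumes sf: "\<And>v. sigma_finite_measure (\<mu> v)" and acyc: "acyclic R"
    and pa_complete: "\<And>v. complete_set R (pa R v)" and d: "\<And>v. is_kernel R \<mu> v (\<lambda>y z. d v y)"
    and "ancestral R S" "complete_factors R \<mu> S fs" "(\<integral>\<^sup>+x. factor_prod fs x \<partial>PiM S \<mu>) = 1"
  shows "kernel_representable R \<mu> S fs"
  using assms(5-7)
proof (induction S arbitrary: fs rule: finite_psubset_induct[OF finite])
  case (1 S)
  show ?case
  proof (cases "S = {}")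
    case True
    have "factor_prod fs x = factor_prod fs (\<lambda>_. undefined)" for x
      using "1.prems"(2) True
      by (intro factor_prod_cong[where T = "{}"]) (auto simp: complete_factors_def)
    moreover have "(\<integral>\<^sup>+x. factor_prod fs x \<partial>PiM S \<mu>) = factor_prod fs (\<lambda>_. undefined)"
      using True by (simp add: PiM_empty nn_integral_count_space_finite)
    ultimately have "factor_prod fs x = 1" for x using "1.prems"(3) by simp
    then show ?thesis
      using d True unfolding kernel_representable_def
      by (intro exI[of _ "\<lambda>v y z. d v y"]) (simp add: kernel_prod_def)
  next
    case False
    then obtain t where t: "t \<in> S" and sink: "\<And>c. c \<in> S \<Longrightarrow> (t, c) \<notin> R"
      using acyclic_obtain_sink[OF acyc] by blast
    have "S - {t} \<subset> S" "ancestral R (S - {t})"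
      using t ancestral_Diff_sink[OF "1.prems"(1) sink] by auto
    then show ?thesis
      by (intro kernel_representable_Diff_sink[OF sf pa_complete d "1.prems"(1) t sink
            "1.prems"(2,3)] "1.IH")
  qed
qed

lemma kernel_prod_eq_factor_prod:
  fixes E :: "('n::finite \<times> 'n) set"
  assumes k: "\<And>v. is_kernel E \<mu> v (k v)"
  obtains fs where "factor_prod fs = kernel_prod E k UNIV"
    and "\<And>C \<phi>. (C, \<phi>) \<in> set fs \<Longrightarrow> (\<exists>s. C = insert s (pa E s)) \<and> \<phi> \<in> borel_measurable (PiM C \<mu>)"
proof -
  obtain xs :: "'n list" where xs: "set xs = UNIV" "distinct xs"
    using finite_distinct_list[of "UNIV :: 'n set"] by auto
  define fs where
    "fs = map (\<lambda>s. (insert s (pa E s), \<lambda>w. ennreal (k s (w s) (restrict w (pa E s))))) xs"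
  have "factor_prod fs x = kernel_prod E k UNIV x" for x
    unfolding factor_prod_def fs_def kernel_prod_def
    using prod.distinct_set_conv_list[OF xs(2), symmetric] xs(1)
    by (simp add: comp_def restrict_restrict Int_absorb1 subset_insertI)
  moreover have "(\<lambda>w. ennreal (k s (w s) (restrict w (pa E s)))) \<in>
      borel_measurable (PiM (insert s (pa E s)) \<mu>)" for s
    using is_kernel_measurable_PiM[OF k, of s "insert s (pa E s)"]
    by (simp add: subset_insertI) measurable
  ultimately show ?thesis
    by (intro that[of fs]) (auto simp: fs_def)
qed

lemma density_eqI_nn_integral:
  assumes "f \<in> borel_measurable M" "g \<in> borel_measurable M"
    and "\<And>A. A \<in> sets M \<Longrightarrow> (\<integral>\<^sup>+x. f x * indicator A x \<partial>M) = (\<integral>\<^sup>+x. g x * indicator A x \<partial>M)"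
  shows "density M f = density M g"
  by (rule measure_eqI) (simp_all add: emeasure_density assms)

lemma model_subset_converse_if_complete:
  fixes E :: "('n::finite \<times> 'n) set"
  assumes sf: "\<And>v. sigma_finite_measure (\<mu> v)" and acyc: "acyclic E"
    and d: "\<And>v. is_kernel (converse E) \<mu> v (\<lambda>y z. d v y)"
    and pa_complete: "\<And>s. complete_set E (pa E s)" and ch_complete: "\<And>s. complete_set E (ch E s)"
  shows "model E \<mu> \<subseteq> model (converse E) \<mu>"
proof
  fix P assume "P \<in> model E \<mu>"
  then have "prob_space P" by (simp add: model_def)
  obtain k where k: "\<And>v. is_kernel E \<mu> v (k v)"
    and P: "P = density (PiM UNIV \<mu>) (kernel_prod E k UNIV)"
    using model_obtain_kernel_prod[OF \<open>P \<in> model E \<mu>\<close>] by blast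
  define R where "R = converse E"
  have acR: "acyclic R" using acyc by (simp add: R_def acyclic_converse)
  have paR: "complete_set R (pa R v)" for v
    using ch_complete[of v] by (auto simp: R_def complete_set_def joined_def pa_def ch_def)
  obtain fs where fs: "factor_prod fs = kernel_prod E k UNIV"
    and fs_set: "\<And>C \<phi>. (C, \<phi>) \<in> set fs \<Longrightarrow>
      (\<exists>s. C = insert s (pa E s)) \<and> \<phi> \<in> borel_measurable (PiM C \<mu>)"
    using kernel_prod_eq_factor_prod[OF k] by blast
  have "complete_set R (insert s (pa E s))" for s
    using pa_complete[of s] by (auto simp: R_def complete_set_def joined_def pa_def)
  then have valid: "complete_factors R \<mu> UNIV fs"
    using fs_set by (fastforce simp: complete_factors_def)
  have meas: "kernel_prod E k UNIV \<in> borel_measurable (PiM UNIV \<mu>)"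
    by (rule kernel_prod_measurable[OF k]) auto
  with \<open>prob_space P\<close> have tot: "(\<integral>\<^sup>+x. factor_prod fs x \<partial>PiM UNIV \<mu>) = 1"
    unfolding fs P by (simp add: prob_space_def prob_space_axioms_def emeasure_density)
  have "ancestral R UNIV" by (simp add: ancestral_def)
  from kernel_representable_if_complete_factors[OF sf acR paR d[folded R_def] this valid tot]
  obtain h where h: "\<And>v. is_kernel R \<mu> v (h v)"
    and hG: "\<And>G. G \<in> borel_measurable (PiM UNIV \<mu>) \<Longrightarrow>
      (\<integral>\<^sup>+x. factor_prod fs x * G x \<partial>PiM UNIV \<mu>) = (\<integral>\<^sup>+x. kernel_prod R h UNIV x * G x \<partial>PiM UNIV \<mu>)"
    by (auto simp: kernel_representable_def)
  have "P = density (PiM UNIV \<mu>) (kernel_prod R h UNIV)"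
    unfolding P using meas kernel_prod_measurable[OF h, of UNIV UNIV] hG
    by (intro density_eqI_nn_integral) (auto simp: fs)
  then show "P \<in> model (converse E) \<mu>"
    using density_kernel_prod_in_model[OF sf acR h] by (simp add: R_def)
qed

section \<open>Counterexamples\<close>

lemma nn_integral_indicator_const:
  assumes "U \<in> sets M" "emeasure M U = 1" "\<And>y. y \<in> U \<Longrightarrow> G y = c"
  shows "(\<integral>\<^sup>+y. indicator U y * G y \<partial>M) = c"
proof -
  have "(\<integral>\<^sup>+y. indicator U y * G y \<partial>M) = (\<integral>\<^sup>+y. c * indicator U y \<partial>M)"
    using assms(3) by (intro nn_integral_cong) (auto simp: indicator_def)
  then show ?thesis using assms(1,2) by (simp add: nn_integral_cmult_indicator)
qed

lemma prod_UNIV_three: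
  fixes g :: "'n::finite \<Rightarrow> 'a::comm_monoid_mult"
  assumes "a \<noteq> b" "a \<noteq> s" "b \<noteq> s"
  shows "(\<Prod>v\<in>UNIV. g v) = g a * g b * g s * (\<Prod>v\<in>-{a, b, s}. g v)"
proof -
  have "UNIV = insert a (insert b (insert s (-{a, b, s})))" by auto
  then have "(\<Prod>v\<in>UNIV. g v) = (\<Prod>v\<in>insert a (insert b (insert s (-{a, b, s}))). g v)" by simp
  also have "\<dots> = g a * g b * g s * (\<Prod>v\<in>-{a, b, s}. g v)"
    using assms by (simp add: mult_ac)
  finally show ?thesis .
qed

lemma inverse_two_add_inverse_two: "inverse 2 + inverse 2 = (1::ennreal)"
  using ennreal_plus[of "1/2" "1/2"] by simp

text \<open>\<open>U v True\<close> and \<open>U v False\<close> encode the two values of a bit at node \<open>v\<close>.\<close>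

locale disjoint_unit_sets =
  fixes \<mu> :: "'n::finite \<Rightarrow> 'v measure" and U :: "'n \<Rightarrow> bool \<Rightarrow> 'v set"
  assumes sigma_finite: "\<And>v. sigma_finite_measure (\<mu> v)"
    and sets_U [measurable]: "\<And>v i. U v i \<in> sets (\<mu> v)"
    and emeasure_U: "\<And>v i. emeasure (\<mu> v) (U v i) = 1"
    and disjoint_U: "\<And>v. U v True \<inter> U v False = {}"
begin

lemma mem_U_iff: "y \<in> U v i \<Longrightarrow> y \<in> U v j \<longleftrightarrow> i = j"
  using disjoint_U[of v] by (cases i; cases j) auto

lemma notin_U_True: "y \<in> U v False \<Longrightarrow> y \<notin> U v True"
  and notin_U_False: "y \<in> U v True \<Longrightarrow> y \<notin> U v False"
  using disjoint_U[of v] by blast+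

lemma nn_integral_indicator_U:
  "(\<And>y. y \<in> U v i \<Longrightarrow> G y = c) \<Longrightarrow> (\<integral>\<^sup>+y. indicator (U v i) y * G y \<partial>\<mu> v) = c"
  by (rule nn_integral_indicator_const[OF sets_U emeasure_U])

lemma measurable_mem_U: "(\<lambda>y. g (y \<in> U v i)) \<in> borel_measurable (\<mu> v)"
proof -
  have "(\<lambda>y. if y \<in> U v i then g True else g False) \<in> borel_measurable (\<mu> v)" by measurable
  then show ?thesis by (simp add: if_distrib[of g, symmetric])
qed

lemma is_kernel_indicator_U:
  assumes "Measurable.pred (PiM (pa R v) \<mu>) P"
  shows "is_kernel R \<mu> v (\<lambda>y z. indicator (U v (P z)) y)"
proof -
  have "(\<lambda>y z. indicator (U v (P z)) y :: real) =
      (\<lambda>y z. if P z then indicator (U v True) y else indicator (U v False) y)"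
    by (auto simp: fun_eq_iff)
  then show ?thesis
    using is_kernel_if[OF assms is_kernel_indicator is_kernel_indicator] emeasure_U by simp
qed

lemma is_kernel_indicator_U_const: "is_kernel R \<mu> v (\<lambda>y z. indicator (U v i) y)"
  by (intro is_kernel_indicator sets_U emeasure_U)

definition coin :: "'n \<Rightarrow> 'v \<Rightarrow> real" where
  "coin v y = indicator (U v True \<union> U v False) y / 2"

lemma ennreal_coin: "ennreal (coin v y) = inverse 2 *
    (indicator (U v True) y + indicator (U v False) y)"
  using disjoint_U[of v] by (cases "y \<in> U v True"; cases "y \<in> U v False") (auto simp: coin_def)

lemma ennreal_coin_U: "y \<in> U v i \<Longrightarrow> ennreal (coin v y) = inverse 2"
  by (cases i) (auto simp: coin_def)

lemma nn_integral_coin: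
  assumes "G \<in> borel_measurable (\<mu> v)"
  shows "(\<integral>\<^sup>+y. ennreal (coin v y) * G y \<partial>\<mu> v) =
    inverse 2 * (\<integral>\<^sup>+y. indicator (U v True) y * G y \<partial>\<mu> v) +
    inverse 2 * (\<integral>\<^sup>+y. indicator (U v False) y * G y \<partial>\<mu> v)"
  using assms
  by (simp add: ennreal_coin distrib_left distrib_right mult.assoc nn_integral_add
      nn_integral_cmult)

lemma is_kernel_coin: "is_kernel R \<mu> v (\<lambda>y z. coin v y)"
proof (rule is_kernel_const)
  show "coin v \<in> borel_measurable (\<mu> v)" unfolding coin_def[abs_def] by measurable
  show "0 \<le> coin v y" for y by (simp add: coin_def)
  have "(\<integral>\<^sup>+y. ennreal (coin v y) * 1 \<partial>\<mu> v) = inverse 2 + inverse 2"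
    by (subst nn_integral_coin) (simp_all add: emeasure_U)
  then show "(\<integral>\<^sup>+y. ennreal (coin v y) \<partial>\<mu> v) = 1" by (simp add: inverse_two_add_inverse_two)
qed

lemma nn_integral_prod_U_neq_zero:
  assumes "\<And>v. 0 < w v"
  shows "(\<integral>\<^sup>+x. (\<Prod>v\<in>UNIV. ennreal (w v) * indicator (U v (c v)) (x v)) \<partial>PiM UNIV \<mu>) \<noteq> 0"
proof (intro product_nn_integral_prod_neq_zero[OF sigma_finite])
  show "(\<integral>\<^sup>+y. ennreal (w v) * indicator (U v (c v)) y \<partial>\<mu> v) \<noteq> 0" for v
    using assms[of v] emeasure_U by (simp add: nn_integral_cmult_indicator)
qed auto

definition background :: "'n set \<Rightarrow> ('n \<Rightarrow> 'v) \<Rightarrow> ennreal" where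
  "background N x = (\<Prod>v\<in>-N. indicator (U v False) (x v))"

lemma background_fun_upd: "c \<in> N \<Longrightarrow> background N (x(c := y)) = background N x"
  unfolding background_def by (intro prod.cong) auto

definition collider_kernel :: "'n \<Rightarrow> 'n \<Rightarrow> 'n \<Rightarrow> 'n \<Rightarrow> 'v \<Rightarrow> ('n \<Rightarrow> 'v) \<Rightarrow> real" where
  "collider_kernel a b s v y z =
    (if v = s then indicator (U s ((z a \<in> U a True) \<noteq> (z b \<in> U b True))) y
     else if v = a \<or> v = b then coin v y else indicator (U v False) y)"

lemma is_kernel_collider_kernel:
  assumes "a \<in> pa E s" "b \<in> pa E s"
  shows "is_kernel E \<mu> v (collider_kernel a b s v)"
proof -
  have [measurable]: "(\<lambda>z. z a) \<in> measurable (PiM (pa E s) \<mu>) (\<mu> a)"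
    "(\<lambda>z. z b) \<in> measurable (PiM (pa E s) \<mu>) (\<mu> b)"
    using assms by (auto intro: measurable_component_singleton)
  have "Measurable.pred (PiM (pa E s) \<mu>) (\<lambda>z. (z a \<in> U a True) \<noteq> (z b \<in> U b True))"
    by measurable
  from is_kernel_indicator_U[OF this] show ?thesis
    using is_kernel_coin[of E v] is_kernel_indicator_U_const[of E v False]
    by (cases "v = s"; cases "v = a \<or> v = b") (auto simp: collider_kernel_def[abs_def])
qed

lemma kernel_prod_collider_kernel:
  assumes "a \<noteq> b" "a \<noteq> s" "b \<noteq> s" "a \<in> pa E s" "b \<in> pa E s"
  shows "kernel_prod E (collider_kernel a b s) UNIV x =
    background {a, b, s} x * ennreal (coin a (x a)) * ennreal (coin b (x b)) *
    indicator (U s ((x a \<in> U a True) \<noteq> (x b \<in> U b True))) (x s)"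
proof -
  have "(\<Prod>v\<in>-{a, b, s}. ennreal (collider_kernel a b s v (x v) (restrict x (pa E v)))) =
      background {a, b, s} x"
    unfolding background_def collider_kernel_def by (intro prod.cong) (auto simp: ennreal_indicator)
  then show ?thesis
    unfolding kernel_prod_def prod_UNIV_three[OF assms(1-3)]
    using assms by (simp add: collider_kernel_def ennreal_indicator mult_ac)
qed

lemma nn_integral_collider_kernel_indicator:
  assumes ab: "a \<noteq> b" "a \<noteq> s" "b \<noteq> s" "a \<in> pa E s" "b \<in> pa E s" and Z: "a \<notin> Z" "b \<notin> Z"
    and \<Phi>: "\<Phi> \<in> borel_measurable (PiM Z \<mu>)"
  shows "(\<integral>\<^sup>+x. kernel_prod E (collider_kernel a b s) UNIV x *
      (indicator (U a i) (x a) * \<Phi> (restrict x Z)) \<partial>PiM UNIV \<mu>) =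
    (\<integral>\<^sup>+x. background {a, b, s} x * \<Phi> (restrict x Z) *
      (inverse 2 * inverse 2 * (indicator (U s True) (x s) + indicator (U s False) (x s)))
          \<partial>PiM (UNIV - {a} - {b}) \<mu>)"
proof -
  let ?f = "kernel_prod E (collider_kernel a b s) UNIV"
  have "(\<lambda>x. ?f x * (indicator (U a i) (x a) * \<Phi> (restrict x Z))) \<in> borel_measurable (PiM UNIV \<mu>)"
    using kernel_prod_measurable[OF is_kernel_collider_kernel[OF ab(4,5)]]
      measurable_comp[OF measurable_restrict_subset \<Phi>] by (simp add: comp_def) measurable
  then have "(\<integral>\<^sup>+x. ?f x * (indicator (U a i) (x a) * \<Phi> (restrict x Z)) \<partial>PiM UNIV \<mu>) =
      (\<integral>\<^sup>+x. (\<integral>\<^sup>+yb. (\<integral>\<^sup>+ya. ?f (x(b := yb, a := ya)) *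
        (indicator (U a i) ya * \<Phi> (restrict (x(b := yb, a := ya)) Z)) \<partial>\<mu> a) \<partial>\<mu> b)
            \<partial>PiM (UNIV - {a} - {b}) \<mu>)"
    using product_nn_integral_remove2(1)[OF sigma_finite _ _ ab(1)] by simp
  also have "\<dots> = (\<integral>\<^sup>+x. background {a, b, s} x * \<Phi> (restrict x Z) *
      (inverse 2 * inverse 2 * (indicator (U s True) (x s) + indicator (U s False) (x s)))
          \<partial>PiM (UNIV - {a} - {b}) \<mu>)"
  proof (rule nn_integral_cong)
    fix x
    define c where "c = background {a, b, s} x * \<Phi> (restrict x Z)"
    define G where "G yb = c * inverse 2 * indicator (U s (i \<noteq> (yb \<in> U b True))) (x s)" for yb
    have inner_a:
        "(\<integral>\<^sup>+ya. ?f (x(b := yb, a := ya)) *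
        (indicator (U a i) ya * \<Phi> (restrict (x(b := yb, a := ya)) Z)) \<partial>\<mu> a) =
        ennreal (coin b yb) * G yb" for yb
    proof -
      have "(\<integral>\<^sup>+ya. ?f (x(b := yb, a := ya)) *
          (indicator (U a i) ya * \<Phi> (restrict (x(b := yb, a := ya)) Z)) \<partial>\<mu> a) =
          (\<integral>\<^sup>+ya. indicator (U a i) ya * (c * ennreal (coin a ya) * ennreal (coin b yb) *
            indicator (U s ((ya \<in> U a True) \<noteq> (yb \<in> U b True))) (x s)) \<partial>\<mu> a)"
        using ab Z by (intro nn_integral_cong)
          (simp add: kernel_prod_collider_kernel background_fun_upd restrict_fupd c_def mult_ac)
      also have "\<dots> = ennreal (coin b yb) * G yb"
        by (rule nn_integral_indicator_U) (auto simp: G_def ennreal_coin_U mem_U_iff mult_ac)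
      finally show ?thesis .
    qed
    have G_U:
      "(\<integral>\<^sup>+yb. indicator (U b True) yb * G yb \<partial>\<mu> b) = c * inverse 2 * indicator (U s (\<not> i)) (x s)"
      "(\<integral>\<^sup>+yb. indicator (U b False) yb * G yb \<partial>\<mu> b) = c * inverse 2 * indicator (U s i) (x s)"
      by (auto intro!: nn_integral_indicator_U simp: G_def notin_U_True)
    have G: "G \<in> borel_measurable (\<mu> b)"
      unfolding G_def[abs_def] by (rule measurable_mem_U)
    show "(\<integral>\<^sup>+yb.
        (\<integral>\<^sup>+ya. ?f (x(b := yb, a := ya)) *
        (indicator (U a i) ya * \<Phi> (restrict (x(b := yb, a := ya)) Z)) \<partial>\<mu> a) \<partial>\<mu> b) =
        background {a, b, s} x * \<Phi> (restrict x Z) *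
            (inverse 2 * inverse 2 * (indicator (U s True) (x s) + indicator (U s False) (x s)))"
      unfolding inner_a nn_integral_coin[OF G] G_U c_def[symmetric]
      by (cases i) (simp_all add: algebra_simps)
  qed
  finally show ?thesis .
qed

lemma collider_model_not_subset_converse:
  assumes acyc: "acyclic E" and edges: "(a, s) \<in> E" "(b, s) \<in> E"
    and ab: "a \<noteq> b" "\<not> joined E a b" "(a, b) \<notin> E\<^sup>*"
  shows "\<not> model E \<mu> \<subseteq> model (converse E) \<mu>"
proof
  assume incl: "model E \<mu> \<subseteq> model (converse E) \<mu>"
  have ne: "a \<noteq> s" "b \<noteq> s" using edges acyc by (auto simp: acyclic_def)
  have pa: "a \<in> pa E s" "b \<in> pa E s" using edges by (auto simp: pa_def)
  have Z: "a \<notin> ch E b" "b \<notin> ch E b" "s \<in> ch E b"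
    using ab(2) acyc edges by (auto simp: ch_def joined_def acyclic_def)
  let ?f = "kernel_prod E (collider_kernel a b s) UNIV"
  define \<psi> where "\<psi> z = (indicator (U s False) (z s) :: ennreal)" for z :: "'n \<Rightarrow> 'v"
  define Q where "Q i = (\<integral>\<^sup>+x. ?f x *
    (indicator (U a i) (x a) * indicator (U b True) (x b) * \<psi> (restrict x (ch E b))) \<partial>PiM UNIV \<mu>)"
    for i
  have "\<psi> \<in> borel_measurable (PiM (ch E b) \<mu>)"
    using Z(3) unfolding \<psi>_def[abs_def] by measurable
  with nn_integral_collider_kernel_indicator[OF ab(1) ne pa Z(1,2)] have "Q False = Q True"
    unfolding Q_def
    by (intro model_subset_converse_sink_cong[OF sigma_finite acyc incl
          is_kernel_collider_kernel[OF pa] ab sets_U sets_U sets_U]) simp_all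
  moreover have zero: "?f x *
      (indicator (U a False) (x a) * indicator (U b True) (x b) * \<psi> (restrict x (ch E b))) = 0" for x
    using Z(3)
    by (auto simp: kernel_prod_collider_kernel[OF ab(1) ne pa] \<psi>_def indicator_def notin_U_True)
  then have "Q False = 0"
    unfolding Q_def by (simp only: zero nn_integral_const mult_zero_left)
  moreover
  define w where "w v = (if v = a \<or> v = b then 1/2 else 1 :: real)" for v
  define c where "c v = (v = a \<or> v = b)" for v
  have "?f x * (indicator (U a True) (x a) * indicator (U b True) (x b) * \<psi> (restrict x (ch E b))) =
      (\<Prod>v\<in>UNIV. ennreal (w v) * indicator (U v (c v)) (x v))" for x
  proof -
    have "(\<Prod>v\<in>-{a, b, s}. ennreal (w v) * indicator (U v (c v)) (x v)) = background {a, b, s} x"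
      unfolding background_def w_def c_def by (intro prod.cong) auto
    then show ?thesis
      using ab(1) ne Z(3)
      unfolding prod_UNIV_three[OF ab(1) ne] kernel_prod_collider_kernel[OF ab(1) ne pa]
      by (cases "x a \<in> U a True"; cases "x b \<in> U b True"; cases "x s \<in> U s False")
        (simp_all add: w_def c_def \<psi>_def ennreal_coin_U mult_ac)
  qed
  then have "Q True \<noteq> 0"
    unfolding Q_def using nn_integral_prod_U_neq_zero[of w c] by (simp add: w_def)
  ultimately show False by simp
qed

definition fork_kernel :: "'n \<Rightarrow> 'n \<Rightarrow> 'n \<Rightarrow> 'n \<Rightarrow> 'v \<Rightarrow> ('n \<Rightarrow> 'v) \<Rightarrow> real" where
  "fork_kernel a b s v y z =
    (if v = a \<or> v = b then indicator (U v (z s \<in> U s True)) y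
     else if v = s then coin s y else indicator (U v False) y)"

lemma is_kernel_fork_kernel:
  assumes "s \<in> pa E a" "s \<in> pa E b"
  shows "is_kernel E \<mu> v (fork_kernel a b s v)"
proof (cases "v = a \<or> v = b")
  case True
  then have [measurable]: "(\<lambda>z. z s) \<in> measurable (PiM (pa E v) \<mu>) (\<mu> s)"
    using assms by (auto intro: measurable_component_singleton)
  have "Measurable.pred (PiM (pa E v) \<mu>) (\<lambda>z. z s \<in> U s True)"
    by measurable
  from is_kernel_indicator_U[OF this] show ?thesis
    using True by (simp add: fork_kernel_def[abs_def])
next
  case False
  then show ?thesis
    using is_kernel_coin[of E v] is_kernel_indicator_U_const[of E v False]
    by (cases "v = s") (auto simp: fork_kernel_def[abs_def])
qed

lemma kernel_prod_fork_kernel: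
  assumes "a \<noteq> b" "a \<noteq> s" "b \<noteq> s" "s \<in> pa E a" "s \<in> pa E b"
  shows "kernel_prod E (fork_kernel a b s) UNIV x =
    background {a, b, s} x * indicator (U a (x s \<in> U s True)) (x a) *
    indicator (U b (x s \<in> U s True)) (x b) * ennreal (coin s (x s))"
proof -
  have "(\<Prod>v\<in>-{a, b, s}. ennreal (fork_kernel a b s v (x v) (restrict x (pa E v)))) =
      background {a, b, s} x"
    unfolding background_def fork_kernel_def by (intro prod.cong) (auto simp: ennreal_indicator)
  then show ?thesis
    unfolding kernel_prod_def prod_UNIV_three[OF assms(1-3)]
    using assms by (simp add: fork_kernel_def ennreal_indicator mult_ac)
qed

lemma nn_integral_fork_kernel_indicator:
  assumes ab: "a \<noteq> b" "a \<noteq> s" "b \<noteq> s" "s \<in> pa E a" "s \<in> pa E b" and Z: "a \<notin> Z" "b \<notin> Z" "s \<notin> Z"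
    and \<Phi>: "\<Phi> \<in> borel_measurable (PiM Z \<mu>)"
  shows "(\<integral>\<^sup>+x. kernel_prod E (fork_kernel a b s) UNIV x *
      (indicator (U a i) (x a) * \<Phi> (restrict x Z)) \<partial>PiM UNIV \<mu>) =
    (\<integral>\<^sup>+x. background {a, b, s} x * \<Phi> (restrict x Z) * inverse 2 \<partial>PiM (UNIV - {a} - {b} - {s}) \<mu>)"
proof -
  let ?f = "kernel_prod E (fork_kernel a b s) UNIV"
  let ?F = "\<lambda>x. ?f x * (indicator (U a i) (x a) * \<Phi> (restrict x Z))"
  have F: "?F \<in> borel_measurable (PiM UNIV \<mu>)"
    using kernel_prod_measurable[OF is_kernel_fork_kernel[OF ab(4,5)]]
      measurable_comp[OF measurable_restrict_subset \<Phi>] by (simp add: comp_def) measurable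
  have "(\<integral>\<^sup>+x. ?F x \<partial>PiM UNIV \<mu>) =
      (\<integral>\<^sup>+x. (\<integral>\<^sup>+yb. (\<integral>\<^sup>+ya. ?F (x(b := yb, a := ya)) \<partial>\<mu> a) \<partial>\<mu> b) \<partial>PiM (UNIV - {a} - {b}) \<mu>)"
    by (rule product_nn_integral_remove2(1)[OF sigma_finite _ _ ab(1) F]) auto
  also have "\<dots> = (\<integral>\<^sup>+x. (\<integral>\<^sup>+ys. (\<integral>\<^sup>+yb. (\<integral>\<^sup>+ya. ?F (x(s := ys, b := yb, a := ya)) \<partial>\<mu> a) \<partial>\<mu> b) \<partial>\<mu> s)
        \<partial>PiM (UNIV - {a} - {b} - {s}) \<mu>)"
    using ab(2,3)
    by (intro
        product_nn_integral_remove(1)[OF sigma_finite _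
        product_nn_integral_remove2(2)[OF sigma_finite _ _ ab(1) F]]) auto
  also have "\<dots> =
      (\<integral>\<^sup>+x. background {a, b, s} x * \<Phi> (restrict x Z) * inverse 2 \<partial>PiM (UNIV - {a} - {b} - {s}) \<mu>)"
  proof (rule nn_integral_cong)
    fix x
    define c where "c = background {a, b, s} x * \<Phi> (restrict x Z)"
    define G where "G ys = c * (if (ys \<in> U s True) = i then 1 else 0)" for ys
    have inner_ab: "(\<integral>\<^sup>+yb. (\<integral>\<^sup>+ya. ?F (x(s := ys, b := yb, a := ya)) \<partial>\<mu> a) \<partial>\<mu> b) =
        ennreal (coin s ys) * G ys" for ys
    proof -
      have "(\<integral>\<^sup>+ya. ?F (x(s := ys, b := yb, a := ya)) \<partial>\<mu> a) =
          (\<integral>\<^sup>+ya. indicator (U a i) ya * (c * indicator (U a (ys \<in> U s True)) ya *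
            indicator (U b (ys \<in> U s True)) yb * ennreal (coin s ys)) \<partial>\<mu> a)" for yb
        using ab Z by (intro nn_integral_cong)
          (simp add: kernel_prod_fork_kernel background_fun_upd restrict_fupd c_def mult_ac)
      also have "\<dots> yb = indicator (U b (ys \<in> U s True)) yb * (ennreal (coin s ys) * G ys)" for yb
        by (rule nn_integral_indicator_U) (auto simp: G_def mem_U_iff mult_ac)
      finally show ?thesis
        by (simp add: nn_integral_indicator_U)
    qed
    have G: "G \<in> borel_measurable (\<mu> s)"
      unfolding G_def[abs_def] by (rule measurable_mem_U)
    have "(\<integral>\<^sup>+ys. indicator (U s True) ys * G ys \<partial>\<mu> s) = c * (if i then 1 else 0)"
      "(\<integral>\<^sup>+ys. indicator (U s False) ys * G ys \<partial>\<mu> s) = c * (if i then 0 else 1)"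
      by (auto intro!: nn_integral_indicator_U simp: G_def notin_U_True)
    then show "(\<integral>\<^sup>+ys. (\<integral>\<^sup>+yb. (\<integral>\<^sup>+ya. ?F (x(s := ys, b := yb, a := ya)) \<partial>\<mu> a) \<partial>\<mu> b) \<partial>\<mu> s) =
        background {a, b, s} x * \<Phi> (restrict x Z) * inverse 2"
      unfolding inner_ab nn_integral_coin[OF G] c_def[symmetric]
      by (cases i) (simp_all add: mult.commute)
  qed
  finally show ?thesis .
qed

lemma fork_model_not_subset_converse:
  assumes acyc: "acyclic E" and edges: "(s, a) \<in> E" "(s, b) \<in> E"
    and ab: "a \<noteq> b" "\<not> joined E a b" "(a, b) \<notin> E\<^sup>*"
  shows "\<not> model E \<mu> \<subseteq> model (converse E) \<mu>"
proof
  assume incl: "model E \<mu> \<subseteq> model (converse E) \<mu>"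
  have ne: "a \<noteq> s" "b \<noteq> s" using edges acyc by (auto simp: acyclic_def)
  have pa: "s \<in> pa E a" "s \<in> pa E b" using edges by (auto simp: pa_def)
  have "(b, s) \<notin> E"
  proof
    assume "(b, s) \<in> E"
    with edges(2) have "(s, s) \<in> E\<^sup>+" by (meson r_into_trancl trancl_trans)
    with acyc show False by (simp add: acyclic_def)
  qed
  then have Z: "a \<notin> ch E b" "b \<notin> ch E b" "s \<notin> ch E b"
    using ab(2) acyc by (auto simp: ch_def joined_def acyclic_def)
  let ?f = "kernel_prod E (fork_kernel a b s) UNIV"
  define Q where "Q i = (\<integral>\<^sup>+x. ?f x *
    (indicator (U a i) (x a) * indicator (U b True) (x b) * 1) \<partial>PiM UNIV \<mu>)" for i
  have "Q False = Q True"
    unfolding Q_def using nn_integral_fork_kernel_indicator[OF ab(1) ne pa Z]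
    by (intro model_subset_converse_sink_cong[OF sigma_finite acyc incl
          is_kernel_fork_kernel[OF pa] ab sets_U sets_U sets_U, where \<psi> = "\<lambda>_. 1"]) simp_all
  moreover have zero:
    "?f x * (indicator (U a False) (x a) * indicator (U b True) (x b) * 1) = 0" for x

    by (cases "x s \<in> U s True")
      (auto simp: kernel_prod_fork_kernel[OF ab(1) ne pa] indicator_def dest: notin_U_True)
  then have "Q False = 0"
    unfolding Q_def by (simp only: zero nn_integral_const mult_zero_left)
  moreover
  define w where "w v = (if v = s then 1/2 else 1 :: real)" for v
  define c where "c v = (v = a \<or> v = b \<or> v = s)" for v
  have "?f x * (indicator (U a True) (x a) * indicator (U b True) (x b) * 1) =
      (\<Prod>v\<in>UNIV. ennreal (w v) * indicator (U v (c v)) (x v))" for x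
  proof -
    have "(\<Prod>v\<in>-{a, b, s}. ennreal (w v) * indicator (U v (c v)) (x v)) = background {a, b, s} x"
      unfolding background_def w_def c_def by (intro prod.cong) auto
    then show ?thesis
      using ab(1) ne
      unfolding prod_UNIV_three[OF ab(1) ne] kernel_prod_fork_kernel[OF ab(1) ne pa]
      by (cases "x a \<in> U a True"; cases "x b \<in> U b True"; cases "x s \<in> U s True")
        (auto simp: w_def c_def ennreal_coin_U mult_ac notin_U_False)
  qed
  then have "Q True \<noteq> 0"
    unfolding Q_def using nn_integral_prod_U_neq_zero[of w c] by (simp add: w_def)
  ultimately show False by simp
qed

lemma complete_set_pa_if_model_subset_converse:
  assumes acyc: "acyclic E" and incl: "model E \<mu> \<subseteq> model (converse E) \<mu>"
  shows "complete_set E (pa E s)"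
  unfolding complete_set_def
proof (intro ballI impI)
  fix a b assume "a \<in> pa E s" "b \<in> pa E s" "a \<noteq> b"
  then have edges: "(a, s) \<in> E" "(b, s) \<in> E" by (auto simp: pa_def)
  show "joined E a b"
  proof (rule ccontr)
    assume nj: "\<not> joined E a b"
    then have nj': "\<not> joined E b a" by (simp add: joined_sym)
    from acyclic_rtrancl_one_direction[OF acyc \<open>a \<noteq> b\<close>] show False
    proof
      assume "(b, a) \<notin> E\<^sup>*"
      with collider_model_not_subset_converse[OF acyc edges(2,1) _ nj'] \<open>a \<noteq> b\<close> incl show False
        by blast
    next
      assume "(a, b) \<notin> E\<^sup>*"
      with collider_model_not_subset_converse[OF acyc edges \<open>a \<noteq> b\<close> nj] incl show False by blast
    qed
  qed
qed

lemma complete_set_ch_if_model_subset_converse: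
  assumes acyc: "acyclic E" and incl: "model E \<mu> \<subseteq> model (converse E) \<mu>"
  shows "complete_set E (ch E s)"
  unfolding complete_set_def
proof (intro ballI impI)
  fix a b assume "a \<in> ch E s" "b \<in> ch E s" "a \<noteq> b"
  then have edges: "(s, a) \<in> E" "(s, b) \<in> E" by (auto simp: ch_def)
  show "joined E a b"
  proof (rule ccontr)
    assume nj: "\<not> joined E a b"
    then have nj': "\<not> joined E b a" by (simp add: joined_sym)
    from acyclic_rtrancl_one_direction[OF acyc \<open>a \<noteq> b\<close>] show False
    proof
      assume "(b, a) \<notin> E\<^sup>*"
      with fork_model_not_subset_converse[OF acyc edges(2,1) _ nj'] \<open>a \<noteq> b\<close> incl show False by blast
    next
      assume "(a, b) \<notin> E\<^sup>*"
      with fork_model_not_subset_converse[OF acyc edges \<open>a \<noteq> b\<close> nj] incl show False by blast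
    qed
  qed
qed

end

section \<open>State spaces\<close>

lemma state_space_sigma_finite:
  assumes "state_space M"
  shows "sigma_finite_measure M"
proof -
  from assms consider (fin) X where "finite X" "M = count_space X"
    | (leb) d where "M = PiM {..<(d::nat)} (\<lambda>_. (lborel :: real measure))"
    unfolding state_space_def by blast
  then show ?thesis
  proof cases
    case fin
    then show ?thesis
      using finite_measure_count_space[OF fin(1)] by (simp add: finite_measure.sigma_finite_measure)
  next
    case leb
    interpret product_sigma_finite "\<lambda>_::nat. (lborel::real measure)"
      by (simp add: product_sigma_finite_def lborel.sigma_finite_measure_axioms)
    show ?thesis using leb sigma_finite[of "{..<d}"] by simp
  qed
qed

lemma state_space_disjoint_unit_sets:
  assumes "state_space M"
  obtains U0 U1 where "U0 \<in> sets M" "U1 \<in> sets M" "U0 \<inter> U1 = {}"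
    "emeasure M U0 = 1" "emeasure M U1 = 1"
proof -
  from assms consider (fin) X where "finite X" "2 \<le> card X" "M = count_space X"
    | (leb) d where "1 \<le> d" "M = PiM {..<(d::nat)} (\<lambda>_. (lborel :: real measure))"
    unfolding state_space_def by blast
  then show ?thesis
  proof cases
    case fin
    then obtain x y where "x \<in> X" "y \<in> X" "x \<noteq> y"
      by (metis card_le_Suc0_iff_eq not_less_eq_eq numeral_2_eq_2)
    then show ?thesis using fin by (intro that[of "{x}" "{y}"]) auto
  next
    case leb
    interpret product_sigma_finite "\<lambda>_::nat. (lborel::real measure)"
      by (simp add: product_sigma_finite_def lborel.sigma_finite_measure_axioms)
    define U0 where "U0 = PiE {..<d} (\<lambda>_. {0..(1::real)})"
    define U1 where "U1 = PiE {..<d} (\<lambda>i. if i = 0 then {2..(3::real)} else {0..1})"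
    have "f 0 \<in> {0..1}" if "f \<in> U0" for f
      using that leb(1) by (auto simp: U0_def PiE_iff)
    moreover have "f 0 \<in> {2..3}" if "f \<in> U1" for f
      using PiE_mem[OF that[unfolded U1_def], of 0] leb(1) by simp
    ultimately have "U0 \<inter> U1 = {}" by force
    moreover have "emeasure M U0 = 1" "emeasure M U1 = 1" unfolding U0_def U1_def leb(2)
      by (subst emeasure_PiM; auto intro!: prod.neutral)+
    moreover have "U0 \<in> sets M" "U1 \<in> sets M" unfolding U0_def U1_def leb(2)
      by (auto intro!: sets_PiM_I_finite)
    ultimately show ?thesis by (intro that)
  qed
qed

lemma state_spaces_disjoint_unit_sets:
  assumes "\<And>s. state_space (\<mu> s)"
  obtains U where "disjoint_unit_sets \<mu> U"
proof -
  have "\<exists>p. fst p \<in> sets (\<mu> s) \<and> snd p \<in> sets (\<mu> s) \<and> fst p \<inter> snd p = {} \<and>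
      emeasure (\<mu> s) (fst p) = 1 \<and> emeasure (\<mu> s) (snd p) = 1" for s
  proof -
    obtain U0 U1 where "U0 \<in> sets (\<mu> s)" "U1 \<in> sets (\<mu> s)" "U0 \<inter> U1 = {}"
      "emeasure (\<mu> s) U0 = 1" "emeasure (\<mu> s) U1 = 1"
      by (rule state_space_disjoint_unit_sets[OF assms])
    then show ?thesis by (intro exI[of _ "(U0, U1)"]) simp
  qed
  then obtain p where p: "\<And>s. fst (p s) \<in> sets (\<mu> s) \<and> snd (p s) \<in> sets (\<mu> s) \<and>
      fst (p s) \<inter> snd (p s) = {} \<and> emeasure (\<mu> s) (fst (p s)) = 1 \<and> emeasure (\<mu> s) (snd (p s)) = 1"
    using choice[of "\<lambda>s p. fst p \<in> sets (\<mu> s) \<and> snd p \<in> sets (\<mu> s) \<and> fst p \<inter> snd p = {} \<and>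
      emeasure (\<mu> s) (fst p) = 1 \<and> emeasure (\<mu> s) (snd p) = 1"] by blast
  have "disjoint_unit_sets \<mu> (\<lambda>s i. if i then snd (p s) else fst (p s))"
  proof (rule disjoint_unit_sets.intro)
    show "sigma_finite_measure (\<mu> v)" for v by (rule state_space_sigma_finite[OF assms])
    show "(if i then snd (p v) else fst (p v)) \<in> sets (\<mu> v)" for v i using p[of v] by simp
    show "emeasure (\<mu> v) (if i then snd (p v) else fst (p v)) = 1" for v i using p[of v] by simp
    show "(if True then snd (p v) else fst (p v)) \<inter> (if False then snd (p v) else fst (p v)) = {}"
      for v
      using p[of v] by auto
  qed
  then show ?thesis by (rule that)
qed

theorem theorem4:
  fixes E :: "('n::finite \<times> 'n) set"
    and \<mu> :: "'n \<Rightarrow> (nat \<Rightarrow> real) measure"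
  assumes "acyclic E"
    and "\<And>s. state_space (\<mu> s)"
  shows "model E \<mu> \<subseteq> model (converse E) \<mu> \<longleftrightarrow>
         (\<forall>s. complete_set E (pa E s) \<and> complete_set E (ch E s))"
proof -
  obtain U where "disjoint_unit_sets \<mu> U"
    using assms(2) by (rule state_spaces_disjoint_unit_sets)
  then interpret disjoint_unit_sets \<mu> U .
  show ?thesis
  proof
    assume incl: "model E \<mu> \<subseteq> model (converse E) \<mu>"
    show "\<forall>s. complete_set E (pa E s) \<and> complete_set E (ch E s)"
      using complete_set_pa_if_model_subset_converse[OF assms(1) incl]
        complete_set_ch_if_model_subset_converse[OF assms(1) incl] by blast
  next
    assume "\<forall>s. complete_set E (pa E s) \<and> complete_set E (ch E s)"
    then show "model E \<mu> \<subseteq> model (converse E) \<mu>"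
      using model_subset_converse_if_complete[OF sigma_finite assms(1)
          is_kernel_indicator_U_const[of "converse E" _ False]]
      by blast
  qed
qed

end
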